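(* Assume $\mathcal E$ is stable under pullback. Let $c$ be a closure operator on $\mathcal A$ and let $X\in\mathcal X$ be $c^\rho$-compact. Factor $\rho_X=\rho_X^{\mathcal M}\rho_X^{\mathcal E}$ with $\rho_X^{\mathcal E}\in\mathcal E$, $\rho_X^{\mathcal M}\in\mathcal M$, and let $R^{\mathcal E}X$ denote the codomain of $\rho_X^{\mathcal E}$. Then: (a) $R^{\mathcal E}X$ is $c^\rho$-compact; (b) if $RX$ is $c$-separated, then $\rho_X\in\mathcal E$ and $RX$ is $c$-compact.
   Context: Standing setting. $\mathcal X$ and $\mathcal A$ are finitely complete categories; $\mathcal X$ carries a proper factorization system $(\mathcal E,\mathcal M)$ and $\mathcal A$ a proper factorization system $(\mathcal F,\mathcal N)$ (proper: every member of $\mathcal E$, resp. $\mathcal F$, is an epimorphism and every member of $\mathcal M$, resp. $\mathcal N$, is a monomorphism). $\mathcal A$ is a full reflective subcategory of $\mathcal X$ with reflector $R:\mathcal X\to\mathcal A$ and reflection (unit) $\rho_X:X\to RX$; as in the paper's setting, $\mathcal N\subseteq\mathcal M$ and $R\mathcal E\subseteq\mathcal F$. For $X\in\mathcal X$, $\operatorname{sub}X$ is the class $\mathcal M/X$ of $\mathcal M$-morphisms with codomain $X$, preordered by $m\le n$ iff $m=nj$ for some morphism $j$; for $A\in\mathcal A$, $\operatorname{sub}_{\mathcal A}A=\mathcal N/A$ with the same preorder. For $f:X\to Y$ and $m\in\operatorname{sub}X$, the image $f(m)\in\operatorname{sub}Y$ is the $\mathcal M$-part of the $(\mathcal E,\mathcal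 M)$-factorization of $fm$, and for $n\in\operatorname{sub}Y$ the preimage $f^{-1}(n)\in\operatorname{sub}X$ is the pullback of $n$ along $f$ (analogously in $\mathcal A$ using $(\mathcal F,\mathcal N)$). A closure operator $c$ on $\mathcal A$ (with respect to $\mathcal N$) is a family of maps $c_A:\operatorname{sub}_{\mathcal A}A\to\operatorname{sub}_{\mathcal A}A$ ($A\in\mathcal A$) such that $m\le c_A(m)$, $m\le n\Rightarrow c_A(m)\le c_A(n)$, and $f(c_A(m))\le c_B(f(m))$ for every morphism $f:A\to B$ of $\mathcal A$; closure operators on $\mathcal X$ (with respect to $\mathcal M$) are defined likewise. For an arbitrary morphism $g:M\to A$ of $\mathcal A$, write $g(1_M)$ for the $\mathcal N$-part of its $(\mathcal F,\mathcal N)$-factorization and put $c_A(g):=c_A(g(1_M))$. The $R$-initial lift of $c$ is the closure operator $c^\rho$ on $\mathcal X$ given by $c^\rho_X(m)=\rho_X^{-1}(c_{RX}(Rm))$ for $X\in\mathcal X$, $m\in\operatorname{sub}X$. A subobject $m$ is $c$-closed if $c(m)=m$; an object $A$ is $c$-separated if its diagonal $\delta_A:A\to A\times A$ is $c$-closed. For a closure operator $d$ on a category, an object $X$ is $d$-compact if for every object $Y$ the projection $\pi_Y:X\times Y\to Y$ is $d$-preserving, i.e. $\pi_Y(d_{X\times Y}(m))=d_Y(\pi_Y(m))$ for every subobject $m$ of $X\times Y$ (for $c$-compactness of an object of $\mathcal A$, $Y$ ranges over $\mathcal A$ and subobjects over $\operatorname{sub}_{\mathcal A}$; for $c^\rho$-compactness,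 over $\mathcal X$ and $\operatorname{sub}$). *)

theory Defs
  imports Main
begin

record ('o, 'm) cat =
  ob  :: "'o set"
  ar  :: "'m set"
  dm  :: "'m \<Rightarrow> 'o"
  cd  :: "'m \<Rightarrow> 'o"
  cp  :: "'m \<Rightarrow> 'm \<Rightarrow> 'm"   (* cp C g f = g \<circ> f *)
  idm :: "'o \<Rightarrow> 'm"

definition is_cat :: "('o, 'm) cat \<Rightarrow> bool" where
  "is_cat C \<equiv>
     (\<forall>f\<in>ar C. dm C f \<in> ob C \<and> cd C f \<in> ob C) \<and>
     (\<forall>a\<in>ob C. idm C a \<in> ar C \<and> dm C (idm C a) = a \<and> cd C (idm C a) = a) \<and>
     (\<forall>f\<in>ar C. \<forall>g\<in>ar C. cd C f = dm C g \<longrightarrow>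
         cp C g f \<in> ar C \<and> dm C (cp C g f) = dm C f \<and> cd C (cp C g f) = cd C g) \<and>
     (\<forall>f\<in>ar C. cp C f (idm C (dm C f)) = f \<and> cp C (idm C (cd C f)) f = f) \<and>
     (\<forall>f\<in>ar C. \<forall>g\<in>ar C. \<forall>h\<in>ar C. cd C f = dm C g \<longrightarrow> cd C g = dm C h \<longrightarrow>
         cp C h (cp C g f) = cp C (cp C h g) f)"

definition hom :: "('o, 'm) cat \<Rightarrow> 'o \<Rightarrow> 'o \<Rightarrow> 'm set" where
  "hom C a b = {f \<in> ar C. dm C f = a \<and> cd C f = b}"

definition mono :: "('o, 'm) cat \<Rightarrow> 'm \<Rightarrow> bool" where
  "mono C m \<equiv> m \<in> ar C \<and>
     (\<forall>f g. f \<in> ar C \<longrightarrow> g \<in> ar C \<longrightarrow> cd C f = dm C m \<longrightarrow> cd C g = dm C m \<longrightarrow>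
            dm C f = dm C g \<longrightarrow> cp C m f = cp C m g \<longrightarrow> f = g)"

definition epi :: "('o, 'm) cat \<Rightarrow> 'm \<Rightarrow> bool" where
  "epi C e \<equiv> e \<in> ar C \<and>
     (\<forall>f g. f \<in> ar C \<longrightarrow> g \<in> ar C \<longrightarrow> dm C f = cd C e \<longrightarrow> dm C g = cd C e \<longrightarrow>
            cd C f = cd C g \<longrightarrow> cp C f e = cp C g e \<longrightarrow> f = g)"

definition iso :: "('o, 'm) cat \<Rightarrow> 'm \<Rightarrow> bool" where
  "iso C f \<equiv> f \<in> ar C \<and> (\<exists>g\<in>ar C. dm C g = cd C f \<and> cd C g = dm C f \<and>
      cp C g f = idm C (dm C f) \<and> cp C f g = idm C (cd C f))"

text \<open>Pullback square: f : a -> z, g : b -> z, p : P -> a, q : P -> b, f p = g q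
  (so p is the pullback of g along f, and q the pullback of f along g).\<close>
definition is_pullback :: "('o, 'm) cat \<Rightarrow> 'm \<Rightarrow> 'm \<Rightarrow> 'm \<Rightarrow> 'm \<Rightarrow> bool" where
  "is_pullback C f g p q \<equiv>
     f \<in> ar C \<and> g \<in> ar C \<and> p \<in> ar C \<and> q \<in> ar C \<and>
     cd C f = cd C g \<and> cd C p = dm C f \<and> cd C q = dm C g \<and> dm C p = dm C q \<and>
     cp C f p = cp C g q \<and>
     (\<forall>u v. u \<in> ar C \<longrightarrow> v \<in> ar C \<longrightarrow> cd C u = dm C f \<longrightarrow> cd C v = dm C g \<longrightarrow>
        dm C u = dm C v \<longrightarrow> cp C f u = cp C g v \<longrightarrow>
        (\<exists>!h. h \<in> ar C \<and> dm C h = dm C u \<and> cd C h = dm C p \<and> cp C p h = u \<and> cp C q h = v))"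

definition is_terminal :: "('o, 'm) cat \<Rightarrow> 'o \<Rightarrow> bool" where
  "is_terminal C t \<equiv> t \<in> ob C \<and> (\<forall>a\<in>ob C. \<exists>!f. f \<in> hom C a t)"

definition finitely_complete :: "('o, 'm) cat \<Rightarrow> bool" where
  "finitely_complete C \<equiv> (\<exists>t. is_terminal C t) \<and>
     (\<forall>f\<in>ar C. \<forall>g\<in>ar C. cd C f = cd C g \<longrightarrow> (\<exists>p q. is_pullback C f g p q))"

definition is_product :: "('o, 'm) cat \<Rightarrow> 'o \<Rightarrow> 'o \<Rightarrow> 'm \<Rightarrow> 'm \<Rightarrow> bool" where
  "is_product C a b p1 p2 \<equiv>
     p1 \<in> ar C \<and> p2 \<in> ar C \<and> dm C p1 = dm C p2 \<and> cd C p1 = a \<and> cd C p2 = b \<and>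
     (\<forall>u v. u \<in> ar C \<longrightarrow> v \<in> ar C \<longrightarrow> dm C u = dm C v \<longrightarrow> cd C u = a \<longrightarrow> cd C v = b \<longrightarrow>
        (\<exists>!h. h \<in> ar C \<and> dm C h = dm C u \<and> cd C h = dm C p1 \<and> cp C p1 h = u \<and> cp C p2 h = v))"

definition factorization_system :: "('o, 'm) cat \<Rightarrow> 'm set \<Rightarrow> 'm set \<Rightarrow> bool" where
  "factorization_system C E M \<equiv>
     E \<subseteq> ar C \<and> M \<subseteq> ar C \<and> {f. iso C f} \<subseteq> E \<inter> M \<and>
     (\<forall>f\<in>E. \<forall>g\<in>E. cd C f = dm C g \<longrightarrow> cp C g f \<in> E) \<and>
     (\<forall>f\<in>M. \<forall>g\<in>M. cd C f = dm C g \<longrightarrow> cp C g f \<in> M) \<and>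
     (\<forall>f\<in>ar C. \<exists>e\<in>E. \<exists>m\<in>M. cd C e = dm C m \<and> f = cp C m e) \<and>
     (\<forall>e\<in>E. \<forall>m\<in>M. \<forall>u v. u \<in> ar C \<longrightarrow> v \<in> ar C \<longrightarrow>
        dm C u = dm C e \<longrightarrow> cd C u = dm C m \<longrightarrow> dm C v = cd C e \<longrightarrow> cd C v = cd C m \<longrightarrow>
        cp C v e = cp C m u \<longrightarrow>
        (\<exists>!d. d \<in> ar C \<and> dm C d = cd C e \<and> cd C d = dm C m \<and> cp C d e = u \<and> cp C m d = v))"

definition proper_fs :: "('o, 'm) cat \<Rightarrow> 'm set \<Rightarrow> 'm set \<Rightarrow> bool" where
  "proper_fs C E M \<equiv> factorization_system C E M \<and> (\<forall>e\<in>E. epi C e) \<and> (\<forall>m\<in>M. mono C m)"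

definition stable_under_pullback :: "('o, 'm) cat \<Rightarrow> 'm set \<Rightarrow> bool" where
  "stable_under_pullback C E \<equiv> \<forall>f g p q. is_pullback C f g p q \<longrightarrow> g \<in> E \<longrightarrow> p \<in> E"

definition sub :: "('o, 'm) cat \<Rightarrow> 'm set \<Rightarrow> 'o \<Rightarrow> 'm set" where
  "sub C M x = {m \<in> M. cd C m = x}"

definition sub_le :: "('o, 'm) cat \<Rightarrow> 'm \<Rightarrow> 'm \<Rightarrow> bool" where
  "sub_le C m n \<equiv> \<exists>j\<in>ar C. dm C j = dm C m \<and> cd C j = dm C n \<and> m = cp C n j"

definition sub_eq :: "('o, 'm) cat \<Rightarrow> 'm \<Rightarrow> 'm \<Rightarrow> bool" where
  "sub_eq C m n \<equiv> sub_le C m n \<and> sub_le C n m"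

text \<open>n is (a representative of) the image f(m): the M-part of an (E,M)-factorization of f m.\<close>
definition is_image :: "('o, 'm) cat \<Rightarrow> 'm set \<Rightarrow> 'm set \<Rightarrow> 'm \<Rightarrow> 'm \<Rightarrow> 'm \<Rightarrow> bool" where
  "is_image C E M f m n \<equiv> n \<in> M \<and> (\<exists>e\<in>E. cd C e = dm C n \<and> cp C f m = cp C n e)"

text \<open>k is (a representative of) the preimage f^{-1}(n): a pullback of n along f.\<close>
definition is_preimage :: "('o, 'm) cat \<Rightarrow> 'm \<Rightarrow> 'm \<Rightarrow> 'm \<Rightarrow> bool" where
  "is_preimage C f n k \<equiv> \<exists>q. is_pullback C f n k q"

definition closure_operator ::
  "('o, 'm) cat \<Rightarrow> 'm set \<Rightarrow> 'm set \<Rightarrow> ('o \<Rightarrow> 'm \<Rightarrow> 'm) \<Rightarrow> bool" where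
  "closure_operator C E M c \<equiv>
     \<forall>x\<in>ob C. \<forall>m\<in>sub C M x.
        c x m \<in> sub C M x \<and> sub_le C m (c x m) \<and>
        (\<forall>n\<in>sub C M x. sub_le C m n \<longrightarrow> sub_le C (c x m) (c x n)) \<and>
        (\<forall>f y n n'. f \<in> hom C x y \<longrightarrow> is_image C E M f (c x m) n \<longrightarrow> is_image C E M f m n'
            \<longrightarrow> sub_le C n (c y n'))"

definition is_closed :: "('o, 'm) cat \<Rightarrow> ('o \<Rightarrow> 'm \<Rightarrow> 'm) \<Rightarrow> 'm \<Rightarrow> bool" where
  "is_closed C c m \<equiv> sub_eq C (c (cd C m) m) m"

definition separated :: "('o, 'm) cat \<Rightarrow> ('o \<Rightarrow> 'm \<Rightarrow> 'm) \<Rightarrow> 'o \<Rightarrow> bool" where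
  "separated C c a \<equiv> \<forall>p1 p2 \<delta>. is_product C a a p1 p2 \<longrightarrow> \<delta> \<in> ar C \<longrightarrow> dm C \<delta> = a \<longrightarrow>
      cd C \<delta> = dm C p1 \<longrightarrow> cp C p1 \<delta> = idm C a \<longrightarrow> cp C p2 \<delta> = idm C a \<longrightarrow> is_closed C c \<delta>"

definition preserving ::
  "('o, 'm) cat \<Rightarrow> 'm set \<Rightarrow> 'm set \<Rightarrow> ('o \<Rightarrow> 'm \<Rightarrow> 'm) \<Rightarrow> 'm \<Rightarrow> bool" where
  "preserving C E M d f \<equiv> \<forall>m\<in>sub C M (dm C f). \<forall>n n'.
      is_image C E M f (d (dm C f) m) n \<longrightarrow> is_image C E M f m n' \<longrightarrow> sub_eq C n (d (cd C f) n')"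

definition compact ::
  "('o, 'm) cat \<Rightarrow> 'm set \<Rightarrow> 'm set \<Rightarrow> ('o \<Rightarrow> 'm \<Rightarrow> 'm) \<Rightarrow> 'o \<Rightarrow> bool" where
  "compact C E M d x \<equiv> x \<in> ob C \<and>
     (\<forall>y\<in>ob C. \<forall>p1 p2. is_product C x y p1 p2 \<longrightarrow> preserving C E M d p2)"

definition fullsub :: "('o, 'm) cat \<Rightarrow> 'o set \<Rightarrow> ('o, 'm) cat" where
  "fullsub C P = C\<lparr>ob := ob C \<inter> P, ar := {f \<in> ar C. dm C f \<in> P \<and> cd C f \<in> P}\<rparr>"

definition is_reflection :: "('o, 'm) cat \<Rightarrow> 'o set \<Rightarrow> ('o \<Rightarrow> 'o) \<Rightarrow> ('o \<Rightarrow> 'm) \<Rightarrow> bool" where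
  "is_reflection C P R \<rho> \<equiv> \<forall>x\<in>ob C. R x \<in> ob C \<inter> P \<and> \<rho> x \<in> hom C x (R x) \<and>
     (\<forall>a\<in>ob C \<inter> P. \<forall>f\<in>hom C x a. \<exists>!g. g \<in> hom C (R x) a \<and> cp C g (\<rho> x) = f)"

definition Rmor :: "('o, 'm) cat \<Rightarrow> ('o \<Rightarrow> 'o) \<Rightarrow> ('o \<Rightarrow> 'm) \<Rightarrow> 'm \<Rightarrow> 'm" where
  "Rmor C R \<rho> f = (THE g. g \<in> hom C (R (dm C f)) (R (cd C f)) \<and>
                          cp C g (\<rho> (dm C f)) = cp C (\<rho> (cd C f)) f)"

text \<open>The R-initial lift c^\<rho> of a closure operator c on A = fullsub C P (w.r.t. (F,N)):
  c^\<rho>_X(m) = \<rho>_X^{-1}(c_{RX}(Rm)), where c_{RX}(Rm) = c_{RX}(N-part of Rm).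
  Representatives are chosen; all choices agree up to isomorphism of subobjects.\<close>
definition crho ::
  "('o, 'm) cat \<Rightarrow> 'o set \<Rightarrow> 'm set \<Rightarrow> 'm set \<Rightarrow> ('o \<Rightarrow> 'o) \<Rightarrow> ('o \<Rightarrow> 'm)
     \<Rightarrow> ('o \<Rightarrow> 'm \<Rightarrow> 'm) \<Rightarrow> 'o \<Rightarrow> 'm \<Rightarrow> 'm" where
  "crho C P F N R \<rho> c x m = (SOME k. \<exists>n.
      is_image (fullsub C P) F N (Rmor C R \<rho> m) (idm C (R (dm C m))) n \<and>
      is_preimage C (\<rho> x) (c (R x) n) k)"

end

theory Submission
  imports Defs
begin

(* The lift c^rho is itself a closure operator on X, and E-images of compact objects are compact
   when E is pullback-stable: for e : X -> Y in E the map e x 1_Z is again in E, and every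
   M-subobject of Y x Z is the image of its preimage under it. This gives (a), and reduces (b) to
   rho_X in E, after which R X is c^rho-compact; as c^rho agrees with c on N-subobjects of objects
   of A, and A is closed under products in X, R X is then c-compact.
   If R X is c-separated, the graph of rho_X is the preimage of the c-closed diagonal of R X, hence
   c^rho-closed. By compactness its image m, the M-part of rho_X, is c^rho-closed, while R m is a
   split epimorphism, so the c^rho-closure of m is all of R X. Hence m is an isomorphism. *)

lemma fullsub_simps [simp]:
  "ob (fullsub C P) = ob C \<inter> P"
  "ar (fullsub C P) = {f \<in> ar C. dm C f \<in> P \<and> cd C f \<in> P}"
  "dm (fullsub C P) = dm C" "cd (fullsub C P) = cd C"
  "cp (fullsub C P) = cp C" "idm (fullsub C P) = idm C"
  by (simp_all add: fullsub_def)

lemma is_cat_fullsub: "is_cat C \<Longrightarrow> P \<subseteq> ob C \<Longrightarrow> is_cat (fullsub C P)"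
  unfolding is_cat_def by auto

section \<open>Categories, pullbacks and products\<close>

locale category =
  fixes C :: "('o, 'm) cat"
  assumes is_cat: "is_cat C"
begin

lemma hom_ob: assumes "f \<in> hom C a b" shows "a \<in> ob C" "b \<in> ob C"
  using assms is_cat by (auto simp: hom_def is_cat_def)

lemma hom_ar: "f \<in> hom C a b \<Longrightarrow> f \<in> ar C"
  by (simp add: hom_def)

lemma ar_hom: "f \<in> ar C \<Longrightarrow> f \<in> hom C (dm C f) (cd C f)"
  by (simp add: hom_def)

lemma comp_hom [intro]: "f \<in> hom C a b \<Longrightarrow> g \<in> hom C b c \<Longrightarrow> cp C g f \<in> hom C a c"
  using is_cat by (auto simp: hom_def is_cat_def)

lemma id_hom [intro]: "a \<in> ob C \<Longrightarrow> idm C a \<in> hom C a a"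
  using is_cat by (auto simp: hom_def is_cat_def)

lemma id_l [simp]: "f \<in> hom C a b \<Longrightarrow> cp C (idm C b) f = f"
  using is_cat by (auto simp: hom_def is_cat_def)

lemma id_r [simp]: "f \<in> hom C a b \<Longrightarrow> cp C f (idm C a) = f"
  using is_cat by (auto simp: hom_def is_cat_def)

lemma assoc:
  "f \<in> hom C a b \<Longrightarrow> g \<in> hom C b c \<Longrightarrow> h \<in> hom C c d \<Longrightarrow>
   cp C h (cp C g f) = cp C (cp C h g) f"
  using is_cat unfolding hom_def is_cat_def by auto

lemma comp_hom_split:
  assumes "f \<in> ar C" "g \<in> ar C" "cd C f = dm C g" "cp C g f \<in> hom C a c"
  shows "f \<in> hom C a (dm C g)" "g \<in> hom C (dm C g) c"
  using assms is_cat unfolding hom_def is_cat_def by auto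

lemma monoD:
  "mono C m \<Longrightarrow> m \<in> hom C b c \<Longrightarrow> u \<in> hom C a b \<Longrightarrow> v \<in> hom C a b \<Longrightarrow>
   cp C m u = cp C m v \<Longrightarrow> u = v"
  unfolding mono_def hom_def by auto

lemma epiD:
  "epi C e \<Longrightarrow> e \<in> hom C a b \<Longrightarrow> u \<in> hom C b c \<Longrightarrow> v \<in> hom C b c \<Longrightarrow>
   cp C u e = cp C v e \<Longrightarrow> u = v"
  unfolding epi_def hom_def by auto

lemma isoI:
  "f \<in> hom C a b \<Longrightarrow> g \<in> hom C b a \<Longrightarrow> cp C g f = idm C a \<Longrightarrow> cp C f g = idm C b \<Longrightarrow> iso C f"
  unfolding iso_def hom_def by auto

lemma mono_right_inverse_iso:
  assumes "mono C m" "m \<in> hom C a b" "s \<in> hom C b a" "cp C m s = idm C b"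
  shows "iso C m"
proof -
  have "cp C m (cp C s m) = cp C m (idm C a)"
    using assoc[OF assms(2,3,2)] assms(2,4) by simp
  then have "cp C s m = idm C a"
    using monoD[OF assms(1,2)] assms(2,3) hom_ob[OF assms(2)] by blast
  then show ?thesis using isoI[OF assms(2,3)] assms(4) by simp
qed

lemma sub_le_iff:
  "m \<in> hom C a z \<Longrightarrow> n \<in> hom C b z \<Longrightarrow> sub_le C m n \<longleftrightarrow> (\<exists>j\<in>hom C a b. m = cp C n j)"
  unfolding sub_le_def hom_def by auto

lemma sub_le_refl: "m \<in> ar C \<Longrightarrow> sub_le C m m"
  unfolding sub_le_def
  by (rule bexI[of _ "idm C (dm C m)"]) (use id_hom ar_hom hom_ob in \<open>auto simp: hom_def\<close>)

lemma sub_le_trans: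
  assumes "sub_le C m n" "sub_le C n l" "l \<in> ar C"
  shows "sub_le C m l"
proof -
  obtain j1 j2 where j: "j1 \<in> hom C (dm C m) (dm C n)" "m = cp C n j1"
      "j2 \<in> hom C (dm C n) (dm C l)" "n = cp C l j2"
    using assms(1,2) unfolding sub_le_def hom_def by auto
  have "cp C j2 j1 \<in> hom C (dm C m) (dm C l)" using j by blast
  moreover have "m = cp C l (cp C j2 j1)" using assoc[OF j(1,3) ar_hom[OF assms(3)]] j by simp
  ultimately show ?thesis unfolding sub_le_def hom_def by blast
qed

lemma pullback_hom:
  assumes "is_pullback C f g p q"
  shows "f \<in> hom C (dm C f) (cd C f)" "g \<in> hom C (dm C g) (cd C f)"
    "p \<in> hom C (dm C p) (dm C f)" "q \<in> hom C (dm C p) (dm C g)" "cp C f p = cp C g q"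
  using assms unfolding is_pullback_def hom_def by auto

lemma pullback_ex1:
  assumes "is_pullback C f g p q" "u \<in> hom C t (dm C f)" "v \<in> hom C t (dm C g)"
    "cp C f u = cp C g v"
  shows "\<exists>!h. h \<in> hom C t (dm C p) \<and> cp C p h = u \<and> cp C q h = v"
proof -
  have U: "\<forall>u v. u \<in> ar C \<longrightarrow> v \<in> ar C \<longrightarrow> cd C u = dm C f \<longrightarrow> cd C v = dm C g \<longrightarrow>
      dm C u = dm C v \<longrightarrow> cp C f u = cp C g v \<longrightarrow>
      (\<exists>!h. h \<in> ar C \<and> dm C h = dm C u \<and> cd C h = dm C p \<and> cp C p h = u \<and> cp C q h = v)"
    using assms(1) unfolding is_pullback_def by blast
  have "\<exists>!h. h \<in> ar C \<and> dm C h = dm C u \<and> cd C h = dm C p \<and> cp C p h = u \<and> cp C q h = v"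
    by (rule U[rule_format]) (use assms(2-4) in \<open>auto simp: hom_def\<close>)
  then show ?thesis using assms(2) by (simp add: hom_def conj_assoc)
qed

lemma pullback_univ:
  assumes "is_pullback C f g p q" "u \<in> hom C t (dm C f)" "v \<in> hom C t (dm C g)"
    "cp C f u = cp C g v"
  obtains h where "h \<in> hom C t (dm C p)" "cp C p h = u" "cp C q h = v"
  using pullback_ex1[OF assms] by blast

lemma pullback_uniq:
  assumes pb: "is_pullback C f g p q" and h: "h \<in> hom C t (dm C p)" "h' \<in> hom C t (dm C p)"
    and "cp C p h = cp C p h'" "cp C q h = cp C q h'"
  shows "h = h'"
proof -
  note D = pullback_hom[OF pb]
  have "cp C f (cp C p h) = cp C g (cp C q h)"
    using assoc[OF h(1) D(3) D(1)] assoc[OF h(1) D(4) D(2)] D(5) by simp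
  then have "\<exists>!k. k \<in> hom C t (dm C p) \<and> cp C p k = cp C p h \<and> cp C q k = cp C q h"
    by (rule pullback_ex1[OF pb comp_hom[OF h(1) D(3)] comp_hom[OF h(1) D(4)]])
  then show ?thesis using h assms(4,5) by (elim alt_ex1E) metis
qed

lemma pullback_intro:
  assumes "f \<in> hom C a z" "g \<in> hom C b z" "p \<in> hom C pp a" "q \<in> hom C pp b"
    "cp C f p = cp C g q"
    and ex: "\<And>t u v. u \<in> hom C t a \<Longrightarrow> v \<in> hom C t b \<Longrightarrow> cp C f u = cp C g v \<Longrightarrow>
      \<exists>h. h \<in> hom C t pp \<and> cp C p h = u \<and> cp C q h = v"
    and un: "\<And>t h h'. h \<in> hom C t pp \<Longrightarrow> h' \<in> hom C t pp \<Longrightarrow>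
      cp C p h = cp C p h' \<Longrightarrow> cp C q h = cp C q h' \<Longrightarrow> h = h'"
  shows "is_pullback C f g p q"
  unfolding is_pullback_def
proof (intro conjI allI impI)
  show "f \<in> ar C" "g \<in> ar C" "p \<in> ar C" "q \<in> ar C" "cd C f = cd C g" "cd C p = dm C f"
    "cd C q = dm C g" "dm C p = dm C q" "cp C f p = cp C g q"
    using assms(1-5) by (auto simp: hom_def)
  fix u v assume uv: "u \<in> ar C" "v \<in> ar C" "cd C u = dm C f" "cd C v = dm C g"
    "dm C u = dm C v" "cp C f u = cp C g v"
  have "u \<in> hom C (dm C u) a" "v \<in> hom C (dm C u) b" using uv assms(1,2) by (auto simp: hom_def)
  then obtain h where "h \<in> hom C (dm C u) pp" "cp C p h = u" "cp C q h = v"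
    using ex uv(6) by blast
  then show "\<exists>!h. h \<in> ar C \<and> dm C h = dm C u \<and> cd C h = dm C p \<and> cp C p h = u \<and> cp C q h = v"
    using un assms(3) by (intro ex1I[of _ h]) (auto simp: hom_def)
qed

lemma pullback_sym:
  assumes "is_pullback C f g p q"
  shows "is_pullback C g f q p"
proof -
  note D = pullback_hom[OF assms]
  show ?thesis
  proof (rule pullback_intro[OF D(2) D(1) D(4) D(3) D(5)[symmetric]])
    fix t u v assume "u \<in> hom C t (dm C g)" "v \<in> hom C t (dm C f)" "cp C g u = cp C f v"
    then show "\<exists>h. h \<in> hom C t (dm C p) \<and> cp C q h = u \<and> cp C p h = v"
      using pullback_univ[OF assms] by metis
  qed (use pullback_uniq[OF assms] in blast)
qed

lemma pullback_mono:
  assumes pb: "is_pullback C f n k q" and n: "mono C n"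
  shows "mono C k"
  unfolding mono_def
proof (intro conjI allI impI)
  note D = pullback_hom[OF pb]
  show "k \<in> ar C" using D(3) by (simp add: hom_def)
  fix u v assume uv: "u \<in> ar C" "v \<in> ar C" "cd C u = dm C k" "cd C v = dm C k"
    "dm C u = dm C v" "cp C k u = cp C k v"
  have u: "u \<in> hom C (dm C u) (dm C k)" and v: "v \<in> hom C (dm C u) (dm C k)"
    using uv by (auto simp: hom_def)
  have "cp C n (cp C q u) = cp C n (cp C q v)"
    using assoc[OF u D(4) D(2)] assoc[OF v D(4) D(2)] D(5)
      assoc[OF u D(3) D(1)] assoc[OF v D(3) D(1)] uv(6) by metis
  then have "cp C q u = cp C q v" using monoD[OF n D(2)] u v D(4) by blast
  then show "u = v" using pullback_uniq[OF pb u v] uv(6) by blast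
qed

lemma product_hom:
  assumes "is_product C a b p1 p2"
  shows "p1 \<in> hom C (dm C p1) a" "p2 \<in> hom C (dm C p1) b"
  using assms unfolding is_product_def hom_def by auto

lemma product_ex1:
  assumes "is_product C a b p1 p2" "u \<in> hom C t a" "v \<in> hom C t b"
  shows "\<exists>!h. h \<in> hom C t (dm C p1) \<and> cp C p1 h = u \<and> cp C p2 h = v"
proof -
  have U: "\<forall>u v. u \<in> ar C \<longrightarrow> v \<in> ar C \<longrightarrow> dm C u = dm C v \<longrightarrow> cd C u = a \<longrightarrow> cd C v = b \<longrightarrow>
      (\<exists>!h. h \<in> ar C \<and> dm C h = dm C u \<and> cd C h = dm C p1 \<and> cp C p1 h = u \<and> cp C p2 h = v)"
    using assms(1) unfolding is_product_def by blast
  have "\<exists>!h. h \<in> ar C \<and> dm C h = dm C u \<and> cd C h = dm C p1 \<and> cp C p1 h = u \<and> cp C p2 h = v"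
    by (rule U[rule_format]) (use assms(2,3) in \<open>auto simp: hom_def\<close>)
  then show ?thesis using assms(2) by (simp add: hom_def conj_assoc)
qed

lemma product_univ:
  assumes "is_product C a b p1 p2" "u \<in> hom C t a" "v \<in> hom C t b"
  obtains h where "h \<in> hom C t (dm C p1)" "cp C p1 h = u" "cp C p2 h = v"
  using product_ex1[OF assms] by blast

lemma product_uniq:
  assumes pr: "is_product C a b p1 p2" and h: "h \<in> hom C t (dm C p1)" "h' \<in> hom C t (dm C p1)"
    and "cp C p1 h = cp C p1 h'" "cp C p2 h = cp C p2 h'"
  shows "h = h'"
  using product_ex1[OF pr comp_hom[OF h(1) product_hom(1)[OF pr]]
      comp_hom[OF h(1) product_hom(2)[OF pr]]] h assms(4,5) by (elim alt_ex1E) metis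

lemma product_intro:
  assumes "p1 \<in> hom C pp a" "p2 \<in> hom C pp b"
    and ex: "\<And>t u v. u \<in> hom C t a \<Longrightarrow> v \<in> hom C t b \<Longrightarrow>
      \<exists>h. h \<in> hom C t pp \<and> cp C p1 h = u \<and> cp C p2 h = v"
    and un: "\<And>t h h'. h \<in> hom C t pp \<Longrightarrow> h' \<in> hom C t pp \<Longrightarrow>
      cp C p1 h = cp C p1 h' \<Longrightarrow> cp C p2 h = cp C p2 h' \<Longrightarrow> h = h'"
  shows "is_product C a b p1 p2"
  unfolding is_product_def
proof (intro conjI allI impI)
  show "p1 \<in> ar C" "p2 \<in> ar C" "dm C p1 = dm C p2" "cd C p1 = a" "cd C p2 = b"
    using assms(1,2) by (auto simp: hom_def)
  fix u v assume uv: "u \<in> ar C" "v \<in> ar C" "dm C u = dm C v" "cd C u = a" "cd C v = b"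
  have "u \<in> hom C (dm C u) a" "v \<in> hom C (dm C u) b" using uv by (auto simp: hom_def)
  then obtain h where "h \<in> hom C (dm C u) pp" "cp C p1 h = u" "cp C p2 h = v"
    using ex by blast
  then show "\<exists>!h. h \<in> ar C \<and> dm C h = dm C u \<and> cd C h = dm C p1 \<and> cp C p1 h = u \<and> cp C p2 h = v"
    using un assms(1) by (intro ex1I[of _ h]) (auto simp: hom_def)
qed

lemma pullback_exists:
  assumes "finitely_complete C" "f \<in> hom C a z" "g \<in> hom C b z"
  obtains p q where "is_pullback C f g p q"
proof -
  have "\<exists>p q. is_pullback C f g p q"
    using assms unfolding finitely_complete_def hom_def by simp
  then show ?thesis using that by blast
qed

text \<open>Products are pullbacks over the terminal object.\<close>
lemma product_exists:
  assumes fc: "finitely_complete C" and "a \<in> ob C" "b \<in> ob C"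
  obtains p1 p2 where "is_product C a b p1 p2"
proof -
  obtain t where t: "is_terminal C t" using fc unfolding finitely_complete_def by auto
  have "\<exists>ta. ta \<in> hom C a t" "\<exists>tb. tb \<in> hom C b t"
    using t assms(2,3) unfolding is_terminal_def by auto
  then obtain ta tb where ta: "ta \<in> hom C a t" and tb: "tb \<in> hom C b t" by blast
  obtain p q where pb: "is_pullback C ta tb p q" using pullback_exists[OF fc ta tb] .
  note D = pullback_hom[OF pb]
  have "is_product C a b p q"
  proof (rule product_intro)
    show "p \<in> hom C (dm C p) a" "q \<in> hom C (dm C p) b" using D ta tb by (auto simp: hom_def)
    fix s u v assume uv: "u \<in> hom C s a" "v \<in> hom C s b"
    have "\<exists>!k. k \<in> hom C s t" using t hom_ob(1)[OF uv(1)] unfolding is_terminal_def by blast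
    then have "cp C ta u = cp C tb v"
      using comp_hom[OF uv(1) ta] comp_hom[OF uv(2) tb] by (elim alt_ex1E) metis
    moreover have "dm C ta = a" "dm C tb = b" using ta tb by (simp_all add: hom_def)
    ultimately obtain h where "h \<in> hom C s (dm C p)" "cp C p h = u" "cp C q h = v"
      using pullback_univ[OF pb, of u s v] uv by auto
    then show "\<exists>h. h \<in> hom C s (dm C p) \<and> cp C p h = u \<and> cp C q h = v" by blast
  qed (fact pullback_uniq[OF pb])
  then show ?thesis using that by blast
qed

lemma product_map_pullback:
  assumes pq: "is_product C y z q1 q2" and pp: "is_product C x z p1 p2"
    and e: "e \<in> hom C x y" and g: "g \<in> hom C (dm C p1) (dm C q1)"
    and g1: "cp C q1 g = cp C e p1" and g2: "cp C q2 g = p2"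
  shows "is_pullback C q1 e g p1"
proof -
  note Q = product_hom[OF pq] and Pp = product_hom[OF pp]
  show ?thesis
  proof (rule pullback_intro[OF Q(1) e g Pp(1) g1])
    fix t u v assume a: "u \<in> hom C t (dm C q1)" "v \<in> hom C t x" "cp C q1 u = cp C e v"
    obtain h where h: "h \<in> hom C t (dm C p1)" "cp C p1 h = v" "cp C p2 h = cp C q2 u"
      using product_univ[OF pp a(2) comp_hom[OF a(1) Q(2)]] by blast
    have "cp C g h = u"
    proof (rule product_uniq[OF pq comp_hom[OF h(1) g] a(1)])
      show "cp C q1 (cp C g h) = cp C q1 u"
        using assoc[OF h(1) g Q(1)] g1 assoc[OF h(1) Pp(1) e] h(2) a(3) by simp
      show "cp C q2 (cp C g h) = cp C q2 u"
        using assoc[OF h(1) g Q(2)] g2 h(3) by simp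
    qed
    then show "\<exists>h. h \<in> hom C t (dm C p1) \<and> cp C g h = u \<and> cp C p1 h = v" using h by blast
  next
    fix t h h' assume a: "h \<in> hom C t (dm C p1)" "h' \<in> hom C t (dm C p1)"
      "cp C g h = cp C g h'" "cp C p1 h = cp C p1 h'"
    have "cp C p2 h = cp C p2 h'"
      using assoc[OF a(1) g Q(2)] assoc[OF a(2) g Q(2)] g2 a(3) by simp
    then show "h = h'" using product_uniq[OF pp a(1,2) a(4)] by blast
  qed
qed

lemma graph_pullback:
  assumes px: "is_product C x a p1 p2" and pa: "is_product C a a \<pi>1 \<pi>2"
    and f: "f \<in> hom C x a"
    and \<gamma>: "\<gamma> \<in> hom C x (dm C p1)" "cp C p1 \<gamma> = idm C x" "cp C p2 \<gamma> = f"
    and \<delta>: "\<delta> \<in> hom C a (dm C \<pi>1)" "cp C \<pi>1 \<delta> = idm C a" "cp C \<pi>2 \<delta> = idm C a"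
    and G: "G \<in> hom C (dm C p1) (dm C \<pi>1)" "cp C \<pi>1 G = cp C f p1" "cp C \<pi>2 G = p2"
  shows "is_pullback C G \<delta> \<gamma> f"
proof -
  note Px = product_hom[OF px] and Pa = product_hom[OF pa]
  have proj_G: "cp C \<pi>1 (cp C G u) = cp C f (cp C p1 u)" "cp C \<pi>2 (cp C G u) = cp C p2 u"
    if "u \<in> hom C t (dm C p1)" for t u
    using assoc[OF that G(1) Pa(1)] assoc[OF that Px(1) f] assoc[OF that G(1) Pa(2)] G(2,3)
    by simp_all
  have proj_\<delta>: "cp C \<pi>1 (cp C \<delta> v) = v" "cp C \<pi>2 (cp C \<delta> v) = v" if "v \<in> hom C t a" for t v
    using assoc[OF that \<delta>(1) Pa(1)] assoc[OF that \<delta>(1) Pa(2)] \<delta>(2,3) that by simp_all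
  have "cp C G \<gamma> = cp C \<delta> f"
    using product_uniq[OF pa comp_hom[OF \<gamma>(1) G(1)] comp_hom[OF f \<delta>(1)]]
      proj_G[OF \<gamma>(1)] proj_\<delta>[OF f] \<gamma>(2,3) f by simp
  then show ?thesis
  proof (rule pullback_intro[OF G(1) \<delta>(1) \<gamma>(1) f])
    fix t u v assume a: "u \<in> hom C t (dm C p1)" "v \<in> hom C t a" "cp C G u = cp C \<delta> v"
    have u1: "cp C p1 u \<in> hom C t x" using a(1) Px(1) by blast
    have fu: "cp C f (cp C p1 u) = v" and p2u: "cp C p2 u = v"
      using proj_G[OF a(1)] proj_\<delta>[OF a(2)] a(3) by metis+
    have "cp C \<gamma> (cp C p1 u) = u"
    proof (rule product_uniq[OF px comp_hom[OF u1 \<gamma>(1)] a(1)])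
      show "cp C p1 (cp C \<gamma> (cp C p1 u)) = cp C p1 u"
        using assoc[OF u1 \<gamma>(1) Px(1)] \<gamma>(2) u1 by simp
      show "cp C p2 (cp C \<gamma> (cp C p1 u)) = cp C p2 u"
        using assoc[OF u1 \<gamma>(1) Px(2)] \<gamma>(3) fu p2u by simp
    qed
    then show "\<exists>h. h \<in> hom C t x \<and> cp C \<gamma> h = u \<and> cp C f h = v" using u1 fu by blast
  next
    fix t h h' assume "h \<in> hom C t x" "h' \<in> hom C t x" "cp C \<gamma> h = cp C \<gamma> h'"
    then show "h = h'" using assoc[OF _ \<gamma>(1) Px(1)] \<gamma>(2) by (metis id_l)
  qed
qed

end

section \<open>Factorization systems and closure operators\<close>

locale factorization_category = category C for C :: "('o, 'm) cat" +
  fixes E M :: "'m set"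
  assumes proper: "proper_fs C E M"
begin

lemma factorization_system: "factorization_system C E M"
  using proper by (simp add: proper_fs_def)

lemma E_ar: "e \<in> E \<Longrightarrow> e \<in> ar C"
  using factorization_system unfolding factorization_system_def by (elim conjE) blast

lemma M_ar: "m \<in> M \<Longrightarrow> m \<in> ar C"
  using factorization_system unfolding factorization_system_def by (elim conjE) blast

lemma iso_E: "iso C f \<Longrightarrow> f \<in> E"
  using factorization_system unfolding factorization_system_def by (elim conjE) blast

lemma iso_M: "iso C f \<Longrightarrow> f \<in> M"
  using factorization_system unfolding factorization_system_def by (elim conjE) blast

lemma E_epi: "e \<in> E \<Longrightarrow> epi C e"
  using proper unfolding proper_fs_def by blast

lemma M_mono: "m \<in> M \<Longrightarrow> mono C m"
  using proper unfolding proper_fs_def by blast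

lemma E_comp:
  assumes "f \<in> E" "g \<in> E" "f \<in> hom C a b" "g \<in> hom C b c"
  shows "cp C g f \<in> E"
proof -
  have "\<forall>f\<in>E. \<forall>g\<in>E. cd C f = dm C g \<longrightarrow> cp C g f \<in> E"
    using factorization_system unfolding factorization_system_def by (elim conjE) assumption
  then show ?thesis using assms by (auto simp: hom_def)
qed

lemma M_comp:
  assumes "f \<in> M" "g \<in> M" "f \<in> hom C a b" "g \<in> hom C b c"
  shows "cp C g f \<in> M"
proof -
  have "\<forall>f\<in>M. \<forall>g\<in>M. cd C f = dm C g \<longrightarrow> cp C g f \<in> M"
    using factorization_system unfolding factorization_system_def by (elim conjE) assumption
  then show ?thesis using assms by (auto simp: hom_def)
qed

lemma factor:
  assumes "f \<in> hom C a b"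
  obtains k e m where "e \<in> E" "m \<in> M" "e \<in> hom C a k" "m \<in> hom C k b" "f = cp C m e"
proof -
  have "\<forall>f\<in>ar C. \<exists>e\<in>E. \<exists>m\<in>M. cd C e = dm C m \<and> f = cp C m e"
    using factorization_system unfolding factorization_system_def by (elim conjE) assumption
  then obtain e m where em: "e \<in> E" "m \<in> M" "cd C e = dm C m" "f = cp C m e"
    using assms by (auto simp: hom_def)
  then have "e \<in> hom C a (cd C e)" "m \<in> hom C (cd C e) b"
    using comp_hom_split[OF E_ar M_ar] assms by auto
  then show ?thesis using that em by blast
qed

lemma diagonal:
  assumes "e \<in> E" "m \<in> M" "e \<in> hom C a b" "m \<in> hom C c d" "u \<in> hom C a c" "v \<in> hom C b d"
    "cp C v e = cp C m u"
  obtains t where "t \<in> hom C b c" "cp C t e = u" "cp C m t = v"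
proof -
  have U: "\<forall>e\<in>E. \<forall>m\<in>M. \<forall>u v. u \<in> ar C \<longrightarrow> v \<in> ar C \<longrightarrow>
      dm C u = dm C e \<longrightarrow> cd C u = dm C m \<longrightarrow> dm C v = cd C e \<longrightarrow> cd C v = cd C m \<longrightarrow>
      cp C v e = cp C m u \<longrightarrow>
      (\<exists>!d. d \<in> ar C \<and> dm C d = cd C e \<and> cd C d = dm C m \<and> cp C d e = u \<and> cp C m d = v)"
    using factorization_system unfolding factorization_system_def by (elim conjE) assumption
  have "\<exists>!d. d \<in> ar C \<and> dm C d = cd C e \<and> cd C d = dm C m \<and> cp C d e = u \<and> cp C m d = v"
    by (rule U[rule_format]) (use assms in \<open>auto simp: hom_def\<close>)
  then show ?thesis using that assms(3,4) by (auto simp: hom_def)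
qed

lemma image_le:
  assumes "e \<in> E" "n \<in> hom C k b" "e \<in> hom C a k" "k' \<in> M" "k' \<in> hom C l b"
    "j \<in> hom C a l" "cp C n e = cp C k' j"
  shows "sub_le C n k'"
proof -
  obtain t where "t \<in> hom C k l" "cp C k' t = n"
    using diagonal[OF assms(1,4,3,5,6,2) assms(7)] by metis
  then show ?thesis using assms(2,5) sub_le_iff by metis
qed

lemma is_imageI:
  "e \<in> E \<Longrightarrow> n \<in> M \<Longrightarrow> e \<in> hom C w k \<Longrightarrow> n \<in> hom C k y \<Longrightarrow> cp C f m = cp C n e \<Longrightarrow>
   is_image C E M f m n"
  unfolding is_image_def hom_def by auto

lemma is_imageE:
  assumes "is_image C E M f m n" "cp C f m \<in> hom C w y"
  obtains e where "e \<in> E" "e \<in> hom C w (dm C n)" "n \<in> hom C (dm C n) y" "cp C f m = cp C n e"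
proof -
  obtain e where e: "n \<in> M" "e \<in> E" "cd C e = dm C n" "cp C f m = cp C n e"
    using assms(1) unfolding is_image_def by blast
  then show ?thesis using that comp_hom_split[OF E_ar M_ar] assms(2) by metis
qed

lemma left_inverse_M:
  assumes g: "g \<in> hom C a b" and s: "s \<in> hom C b a" and sg: "cp C s g = idm C a"
  shows "g \<in> M"
proof -
  obtain k e m where em: "e \<in> E" "m \<in> M" "e \<in> hom C a k" "m \<in> hom C k b" "g = cp C m e"
    using factor[OF g] .
  have sm: "cp C s m \<in> hom C k a" using em s by blast
  have sme: "cp C (cp C s m) e = idm C a" using assoc[OF em(3,4) s] em(5) sg by simp
  have "cp C (cp C e (cp C s m)) e = cp C (idm C k) e"
    using assoc[OF em(3) sm em(3)] sme em(3) by simp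
  then have "cp C e (cp C s m) = idm C k"
    using epiD[OF E_epi[OF em(1)] em(3)] sm em(3) hom_ob[OF em(3)] by blast
  then have "e \<in> M" using iso_M isoI[OF em(3) sm sme] by blast
  then show ?thesis using M_comp[OF _ em(2) em(3,4)] em(5) by simp
qed

lemma pullback_M:
  assumes pb: "is_pullback C f n k q" and n: "n \<in> M"
  shows "k \<in> M"
proof -
  note D = pullback_hom[OF pb]
  let ?P = "dm C k"
  obtain l e m where em: "e \<in> E" "m \<in> M" "e \<in> hom C ?P l" "m \<in> hom C l (dm C f)" "k = cp C m e"
    using factor[OF D(3)] .
  have "cp C (cp C f m) e = cp C n q" using assoc[OF em(3,4) D(1)] em(5) D(5) by simp
  then obtain t where t: "t \<in> hom C l (dm C n)" "cp C n t = cp C f m"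
    using diagonal[OF em(1) n em(3) D(2) D(4) comp_hom[OF em(4) D(1)]] by metis
  obtain h where h: "h \<in> hom C l ?P" "cp C k h = m"
    using pullback_univ[OF pb em(4) t(1) t(2)[symmetric]] by metis
  have "cp C k (cp C h e) = cp C k (idm C ?P)"
    using assoc[OF em(3) h(1) D(3)] h(2) em(5) D(3) by simp
  then have he: "cp C h e = idm C ?P"
    using monoD[OF pullback_mono[OF pb M_mono[OF n]] D(3)] h(1) em(3) hom_ob[OF D(3)] by blast
  have "cp C m (cp C e h) = cp C m (idm C l)"
    using assoc[OF h(1) em(3,4)] h(2) em(5) em(4) by simp
  then have "cp C e h = idm C l"
    using monoD[OF M_mono[OF em(2)] em(4)] h(1) em(3) hom_ob[OF em(4)] by blast
  then have "e \<in> M" using iso_M isoI[OF em(3) h(1) he] by blast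
  then show ?thesis using M_comp[OF _ em(2) em(3,4)] em(5) by simp
qed

lemma closureD:
  assumes "closure_operator C E M d" "m \<in> M" "m \<in> hom C w x"
  shows "d x m \<in> M" "d x m \<in> hom C (dm C (d x m)) x" "sub_le C m (d x m)"
    "\<And>n. n \<in> M \<Longrightarrow> cd C n = x \<Longrightarrow> sub_le C m n \<Longrightarrow> sub_le C (d x m) (d x n)"
    "\<And>f y n n'. f \<in> hom C x y \<Longrightarrow> is_image C E M f (d x m) n \<Longrightarrow> is_image C E M f m n' \<Longrightarrow>
      sub_le C n (d y n')"
proof -
  have "x \<in> ob C" "m \<in> sub C M x" using assms(2,3) hom_ob by (auto simp: sub_def hom_def)
  then have "d x m \<in> sub C M x \<and> sub_le C m (d x m) \<and>
      (\<forall>n\<in>sub C M x. sub_le C m n \<longrightarrow> sub_le C (d x m) (d x n)) \<and>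
      (\<forall>f y n n'. f \<in> hom C x y \<longrightarrow> is_image C E M f (d x m) n \<longrightarrow> is_image C E M f m n'
        \<longrightarrow> sub_le C n (d y n'))"
    using assms(1) unfolding closure_operator_def by blast
  then show "d x m \<in> M" "d x m \<in> hom C (dm C (d x m)) x" "sub_le C m (d x m)"
    "\<And>n. n \<in> M \<Longrightarrow> cd C n = x \<Longrightarrow> sub_le C m n \<Longrightarrow> sub_le C (d x m) (d x n)"
    "\<And>f y n n'. f \<in> hom C x y \<Longrightarrow> is_image C E M f (d x m) n \<Longrightarrow> is_image C E M f m n' \<Longrightarrow>
      sub_le C n (d y n')"
    using M_ar by (auto simp: sub_def hom_def)
qed

lemma closure_comp_le:
  assumes clo: "closure_operator C E M d" and m: "m \<in> M" "m \<in> hom C w x" and f: "f \<in> hom C x y"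
    and n: "n \<in> M" "n \<in> hom C k y" "j \<in> hom C w k" "cp C f m = cp C n j"
  shows "sub_le C (cp C f (d x m)) (d y n)"
proof -
  note dm = closureD[OF clo m]
  obtain l e1 n1 where fdm: "e1 \<in> E" "n1 \<in> M" "e1 \<in> hom C (dm C (d x m)) l" "n1 \<in> hom C l y"
      "cp C f (d x m) = cp C n1 e1"
    using factor[OF comp_hom[OF dm(2) f]] .
  obtain l' e2 n2 where fm: "e2 \<in> E" "n2 \<in> M" "e2 \<in> hom C w l'" "n2 \<in> hom C l' y"
      "cp C f m = cp C n2 e2"
    using factor[OF comp_hom[OF m(2) f]] .
  have "sub_le C (cp C f (d x m)) n1"
    using fdm(3-5) comp_hom[OF dm(2) f] sub_le_iff by metis
  moreover have "sub_le C n1 (d y n2)"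
    using dm(5)[OF f is_imageI[OF fdm(1-4,5)] is_imageI[OF fm(1-4,5)]] .
  moreover have "sub_le C n2 n" using image_le[OF fm(1,4,3) n(1-3)] fm(5) n(4) by simp
  then have "sub_le C (d y n2) (d y n)"
    using closureD(4)[OF clo fm(2,4) n(1)] n(2) by (simp add: hom_def)
  ultimately show ?thesis
    using sub_le_trans hom_ar closureD(2)[OF clo fm(2,4)] closureD(2)[OF clo n(1,2)] by meson
qed

lemma preservingI:
  assumes clo: "closure_operator C E M d" and f: "f \<in> hom C a b"
    and le: "\<And>m n n'. m \<in> M \<Longrightarrow> m \<in> hom C (dm C m) a \<Longrightarrow> is_image C E M f (d a m) n \<Longrightarrow>
      is_image C E M f m n' \<Longrightarrow> sub_le C (d b n') n"
  shows "preserving C E M d f"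
  unfolding preserving_def sub_eq_def
proof (intro ballI allI impI conjI)
  fix m n n' assume m: "m \<in> sub C M (dm C f)" and "is_image C E M f (d (dm C f) m) n"
    "is_image C E M f m n'"
  moreover have "m \<in> M" "m \<in> hom C (dm C m) a" "dm C f = a" "cd C f = b"
    using m f M_ar by (auto simp: sub_def hom_def)
  ultimately show "sub_le C n (d (cd C f) n')" "sub_le C (d (cd C f) n') n"
    using closureD(5)[OF clo] f le by auto
qed

lemma preserving_le:
  assumes clo: "closure_operator C E M d" and pres: "preserving C E M d f" and f: "f \<in> hom C a b"
    and m: "m \<in> M" "m \<in> hom C w a" and img: "is_image C E M f m n'"
    and k: "k \<in> M" "k \<in> hom C l b" "j \<in> hom C (dm C (d a m)) l" "cp C f (d a m) = cp C k j"
  shows "sub_le C (d b n') k"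
proof -
  note dm = closureD[OF clo m]
  obtain l' e n where f_dm: "e \<in> E" "n \<in> M" "e \<in> hom C (dm C (d a m)) l'" "n \<in> hom C l' b"
      "cp C f (d a m) = cp C n e"
    using factor[OF comp_hom[OF dm(2) f]] .
  have "m \<in> sub C M (dm C f)" "dm C f = a" "cd C f = b" using m f by (auto simp: sub_def hom_def)
  then have "sub_le C (d b n') n"
    using pres is_imageI[OF f_dm(1-4,5)] img unfolding preserving_def sub_eq_def by blast
  moreover have "sub_le C n k" using image_le[OF f_dm(1,4,3) k(1,2,3)] f_dm(5) k(4) by simp
  ultimately show ?thesis using sub_le_trans k(2) by (auto simp: hom_def)
qed

text \<open>Every \<open>M\<close>-subobject of \<open>w\<close> is the image under \<open>g\<close> of its preimage, as \<open>E\<close> is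
  pullback-stable.\<close>
lemma preserving_cancel_E:
  assumes fc: "finitely_complete C" and stable: "stable_under_pullback C E"
    and clo: "closure_operator C E M d" and g: "g \<in> E" "g \<in> hom C v w" and q: "q \<in> hom C w z"
    and pres: "preserving C E M d (cp C q g)"
  shows "preserving C E M d q"
proof (rule preservingI[OF clo q])
  fix n n1 n2 assume n: "n \<in> M" "n \<in> hom C (dm C n) w"
    and n1: "is_image C E M q (d w n) n1" and n2: "is_image C E M q n n2"
  note dn = closureD[OF clo n]
  obtain e1 where e1: "e1 \<in> hom C (dm C (d w n)) (dm C n1)" "n1 \<in> hom C (dm C n1) z"
      "cp C q (d w n) = cp C n1 e1"
    using is_imageE[OF n1 comp_hom[OF dn(2) q]] by metis
  obtain e2 where e2: "e2 \<in> E" "e2 \<in> hom C (dm C n) (dm C n2)" "n2 \<in> hom C (dm C n2) z"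
      "cp C q n = cp C n2 e2"
    using is_imageE[OF n2 comp_hom[OF n(2) q]] .
  obtain k k' where gn: "is_pullback C g n k k'" using pullback_exists[OF fc g(2) n(2)] .
  define u where "u = dm C k"
  have k: "k \<in> M" "k \<in> hom C u v" and k': "k' \<in> E" "k' \<in> hom C u (dm C n)"
    using pullback_M[OF gn n(1)] pullback_hom[OF gn] stable g n(2) pullback_sym[OF gn]
    unfolding stable_under_pullback_def u_def by (auto simp: hom_def)
  have "cp C (cp C q g) k = cp C q (cp C n k')"
    using assoc[OF k(2) g(2) q] pullback_hom(5)[OF gn] by simp
  also have "\<dots> = cp C n2 (cp C e2 k')"
    using assoc[OF k'(2) n(2) q] assoc[OF k'(2) e2(2,3)] e2(4) by simp
  finally have "is_image C E M (cp C q g) k n2"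
    using is_imageI[OF E_comp[OF k'(1) e2(1) k'(2) e2(2)] _ comp_hom[OF k'(2) e2(2)] e2(3)] n2
    unfolding is_image_def by blast
  moreover note dk = closureD[OF clo k]
  obtain h where h: "h \<in> hom C (dm C (d v k)) (dm C (d w n))" "cp C g (d v k) = cp C (d w n) h"
    using closure_comp_le[OF clo k g(2) n(1,2) k'(2) pullback_hom(5)[OF gn]]
      sub_le_iff[OF comp_hom[OF dk(2) g(2)] dn(2)] by blast
  have "cp C (cp C q g) (d v k) = cp C n1 (cp C e1 h)"
    using assoc[OF dk(2) g(2) q] h(2) assoc[OF h(1) dn(2) q] e1(3) assoc[OF h(1) e1(1,2)] by simp
  ultimately show "sub_le C (d z n2) n1"
    using preserving_le[OF clo pres comp_hom[OF g(2) q] k _ _ e1(2) comp_hom[OF h(1) e1(1)]] n1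
    unfolding is_image_def by blast
qed

lemma compact_image_E:
  assumes fc: "finitely_complete C" and stable: "stable_under_pullback C E"
    and clo: "closure_operator C E M d" and cpt: "compact C E M d x"
    and e: "e \<in> E" "e \<in> hom C x y"
  shows "compact C E M d y"
  unfolding compact_def
proof (intro conjI ballI allI impI)
  show "y \<in> ob C" using hom_ob(2)[OF e(2)] .
  fix z q1 q2 assume z: "z \<in> ob C" and yz: "is_product C y z q1 q2"
  obtain p1 p2 where xz: "is_product C x z p1 p2" using product_exists[OF fc hom_ob(1)[OF e(2)] z] .
  note p = product_hom[OF xz] and q = product_hom[OF yz]
  obtain g where g: "g \<in> hom C (dm C p1) (dm C q1)" "cp C q1 g = cp C e p1" "cp C q2 g = p2"
    using product_univ[OF yz comp_hom[OF p(1) e(2)] p(2)] by blast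
  have "is_pullback C q1 e g p1" using product_map_pullback[OF yz xz e(2) g] .
  then have "g \<in> E" using stable e(1) unfolding stable_under_pullback_def by blast
  moreover have "preserving C E M d (cp C q2 g)" using cpt z xz g(3) unfolding compact_def by blast
  ultimately show "preserving C E M d q2" using preserving_cancel_E[OF fc stable clo _ g(1) q(2)] by blast
qed

end

section \<open>The reflective subcategory\<close>

locale reflective_setting =
  fixes X :: "('o, 'm) cat" and P :: "'o set"
    and E M F N :: "'m set"
    and R :: "'o \<Rightarrow> 'o" and \<rho> :: "'o \<Rightarrow> 'm"
    and c :: "'o \<Rightarrow> 'm \<Rightarrow> 'm"
  assumes catX: "is_cat X"
    and fcX: "finitely_complete X"
    and fsX: "proper_fs X E M"
    and fsA: "proper_fs (fullsub X P) F N"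
    and subA: "P \<subseteq> ob X"
    and refl: "is_reflection X P R \<rho>"
    and NM: "N \<subseteq> M"
    and RE: "\<forall>f\<in>E. Rmor X R \<rho> f \<in> F"
    and clos: "closure_operator (fullsub X P) F N c"
begin

abbreviation A where "A \<equiv> fullsub X P"
abbreviation Rm where "Rm \<equiv> Rmor X R \<rho>"
abbreviation c\<rho> where "c\<rho> \<equiv> crho X P F N R \<rho> c"

sublocale X: factorization_category X E M
  by unfold_locales (auto simp: catX fsX)

sublocale A: factorization_category A F N
  rewrites "cp A = cp X" and "dm A = dm X" and "cd A = cd X" and "idm A = idm X"
  by unfold_locales (auto simp: catX fsA subA is_cat_fullsub)

lemma hom_A: "f \<in> hom A a b \<longleftrightarrow> f \<in> hom X a b \<and> a \<in> P \<and> b \<in> P"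
  by (auto simp: hom_def)

lemma F_hom: "f \<in> F \<Longrightarrow> f \<in> hom X (dm X f) (cd X f) \<and> dm X f \<in> P \<and> cd X f \<in> P"
  using A.E_ar by (auto simp: hom_def)

lemma N_hom: "n \<in> N \<Longrightarrow> n \<in> hom X (dm X n) (cd X n) \<and> dm X n \<in> P \<and> cd X n \<in> P"
  using A.M_ar by (auto simp: hom_def)

lemma sub_le_A: "m \<in> ar A \<Longrightarrow> n \<in> ar A \<Longrightarrow> sub_le A m n \<longleftrightarrow> sub_le X m n"
  unfolding sub_le_def by auto

lemma reflection_at:
  "x \<in> ob X \<Longrightarrow> R x \<in> ob X \<inter> P \<and> \<rho> x \<in> hom X x (R x) \<and>
     (\<forall>a\<in>ob X \<inter> P. \<forall>f\<in>hom X x a. \<exists>!g. g \<in> hom X (R x) a \<and> cp X g (\<rho> x) = f)"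
  using refl unfolding is_reflection_def by (rule bspec)

lemma R_ob: "x \<in> ob X \<Longrightarrow> R x \<in> ob X" "x \<in> ob X \<Longrightarrow> R x \<in> P"
  using reflection_at by blast+

lemma rho_hom: "x \<in> ob X \<Longrightarrow> \<rho> x \<in> hom X x (R x)"
  using reflection_at by blast

lemma reflection_ex1:
  assumes "x \<in> ob X" "a \<in> P" "f \<in> hom X x a"
  shows "\<exists>!g. g \<in> hom X (R x) a \<and> cp X g (\<rho> x) = f"
  using reflection_at[OF assms(1)] assms(2,3) subA by blast

lemma reflection_uniq:
  assumes "x \<in> ob X" "a \<in> P" "g \<in> hom X (R x) a" "g' \<in> hom X (R x) a"
    "cp X g (\<rho> x) = cp X g' (\<rho> x)"
  shows "g = g'"
  using reflection_ex1[OF assms(1,2) X.comp_hom[OF rho_hom[OF assms(1)] assms(3)]] assms(3-5)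
  by (elim alt_ex1E) metis

lemma rho_inverse:
  assumes a: "a \<in> P"
  obtains \<sigma> where "\<sigma> \<in> hom X (R a) a" "cp X \<sigma> (\<rho> a) = idm X a" "cp X (\<rho> a) \<sigma> = idm X (R a)"
    "\<sigma> \<in> F" "\<sigma> \<in> N" "\<rho> a \<in> F" "\<rho> a \<in> N"
proof -
  have ao: "a \<in> ob X" using a subA by auto
  note \<rho>a = rho_hom[OF ao]
  obtain \<sigma> where \<sigma>: "\<sigma> \<in> hom X (R a) a" "cp X \<sigma> (\<rho> a) = idm X a"
    using reflection_ex1[OF ao a X.id_hom[OF ao]] by blast
  have "cp X (cp X (\<rho> a) \<sigma>) (\<rho> a) = cp X (idm X (R a)) (\<rho> a)"
    using X.assoc[OF \<rho>a \<sigma>(1) \<rho>a] \<sigma>(2) \<rho>a by simp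
  then have \<rho>\<sigma>: "cp X (\<rho> a) \<sigma> = idm X (R a)"
    using reflection_uniq[OF ao R_ob(2)[OF ao]] X.comp_hom[OF \<sigma>(1) \<rho>a] X.id_hom[OF R_ob(1)[OF ao]]
    by blast
  have "\<rho> a \<in> hom A a (R a)" "\<sigma> \<in> hom A (R a) a" using \<rho>a \<sigma>(1) a R_ob[OF ao] by (auto simp: hom_A)
  then have "iso A (\<rho> a)" "iso A \<sigma>" using A.isoI \<sigma>(2) \<rho>\<sigma> by blast+
  then show ?thesis using that \<sigma> \<rho>\<sigma> A.iso_E A.iso_M by blast
qed

lemma Rmor_spec:
  assumes "f \<in> hom X a b"
  shows "Rm f \<in> hom X (R a) (R b)" "cp X (Rm f) (\<rho> a) = cp X (\<rho> b) f"
proof -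
  have ab: "a \<in> ob X" "b \<in> ob X" using X.hom_ob[OF assms] by auto
  have "\<exists>!g. g \<in> hom X (R a) (R b) \<and> cp X g (\<rho> a) = cp X (\<rho> b) f"
    using reflection_ex1[OF ab(1) R_ob(2)[OF ab(2)] X.comp_hom[OF assms rho_hom[OF ab(2)]]] .
  moreover have "dm X f = a" "cd X f = b" using assms by (auto simp: hom_def)
  ultimately show "Rm f \<in> hom X (R a) (R b)" "cp X (Rm f) (\<rho> a) = cp X (\<rho> b) f"
    unfolding Rmor_def using theI'[where P = "\<lambda>g. g \<in> hom X (R a) (R b) \<and> cp X g (\<rho> a) = cp X (\<rho> b) f"]
    by auto
qed

lemma Rmor_uniq:
  assumes "f \<in> hom X a b" "g \<in> hom X (R a) (R b)" "cp X g (\<rho> a) = cp X (\<rho> b) f"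
  shows "Rm f = g"
  using reflection_uniq[OF X.hom_ob(1)[OF assms(1)] R_ob(2)[OF X.hom_ob(2)[OF assms(1)]]
      Rmor_spec(1)[OF assms(1)] assms(2)] Rmor_spec(2)[OF assms(1)] assms(3) by simp

lemma Rmor_comp:
  assumes f: "f \<in> hom X a b" and g: "g \<in> hom X b z"
  shows "Rm (cp X g f) = cp X (Rm g) (Rm f)"
proof (rule Rmor_uniq)
  note Rf = Rmor_spec[OF f] and Rg = Rmor_spec[OF g]
  have ob: "a \<in> ob X" "z \<in> ob X" using X.hom_ob f g by auto
  show "cp X g f \<in> hom X a z" "cp X (Rm g) (Rm f) \<in> hom X (R a) (R z)" using f g Rf Rg by blast+
  show "cp X (cp X (Rm g) (Rm f)) (\<rho> a) = cp X (\<rho> z) (cp X g f)"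
    using X.assoc[OF rho_hom[OF ob(1)] Rf(1) Rg(1)] Rf(2) X.assoc[OF f rho_hom Rg(1)]
      X.hom_ob(1)[OF g] Rg(2) X.assoc[OF f g rho_hom[OF ob(2)]] by simp
qed

lemma Rmor_rho: "x \<in> ob X \<Longrightarrow> Rm (\<rho> x) = \<rho> (R x)"
  by (rule Rmor_uniq[OF rho_hom]) (use rho_hom R_ob in auto)

text \<open>On \<open>A\<close> the reflector is conjugation by the isomorphisms \<open>\<rho>\<close>.\<close>
lemma Rmor_F:
  assumes f: "f \<in> F"
  shows "Rm f \<in> F"
proof -
  define a b where "a = dm X f" and "b = cd X f"
  have f': "f \<in> hom X a b" "a \<in> P" "b \<in> P" using F_hom[OF f] unfolding a_def b_def by auto
  obtain \<sigma> where \<sigma>: "\<sigma> \<in> hom X (R a) a" "cp X (\<rho> a) \<sigma> = idm X (R a)" "\<sigma> \<in> F"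
    using rho_inverse[OF f'(2)] by metis
  obtain \<rho>b: "\<rho> b \<in> F" using rho_inverse[OF f'(3)] by metis
  have ob: "a \<in> ob X" "b \<in> ob X" using f' subA by auto
  have "Rm f = cp X (Rm f) (cp X (\<rho> a) \<sigma>)" using \<sigma>(2) Rmor_spec(1)[OF f'(1)] by simp
  also have "\<dots> = cp X (\<rho> b) (cp X f \<sigma>)"
    using X.assoc[OF \<sigma>(1) rho_hom[OF ob(1)] Rmor_spec(1)[OF f'(1)]] Rmor_spec(2)[OF f'(1)]
      X.assoc[OF \<sigma>(1) f'(1) rho_hom[OF ob(2)]] by simp
  moreover have "\<sigma> \<in> hom A (R a) a" "f \<in> hom A a b" "\<rho> b \<in> hom A b (R b)"
    using \<sigma>(1) f' R_ob ob rho_hom by (auto simp: hom_A)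
  ultimately show ?thesis using A.E_comp[OF A.E_comp[OF \<sigma>(3) f] \<rho>b] A.comp_hom by metis
qed

text \<open>Maps into objects of \<open>A\<close> factor uniquely through \<open>\<rho>\<close>.\<close>
lemma product_A_X:
  assumes a: "a \<in> P" "b \<in> P" and prod: "is_product A a b p1 p2"
  shows "is_product X a b p1 p2"
proof -
  note PA = A.product_hom[OF prod]
  define Q where "Q = dm X p1"
  have QP: "Q \<in> P" and p: "p1 \<in> hom X Q a" "p2 \<in> hom X Q b"
    using PA unfolding Q_def by (auto simp: hom_A)
  show ?thesis
  proof (rule X.product_intro[OF p])
    fix t u v assume uv: "u \<in> hom X t a" "v \<in> hom X t b"
    have t: "t \<in> ob X" "R t \<in> P" using X.hom_ob(1)[OF uv(1)] R_ob by auto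
    obtain u' v' where u': "u' \<in> hom X (R t) a" "cp X u' (\<rho> t) = u"
      and v': "v' \<in> hom X (R t) b" "cp X v' (\<rho> t) = v"
      using reflection_ex1[OF t(1) a(1) uv(1)] reflection_ex1[OF t(1) a(2) uv(2)] by blast
    obtain h where h: "h \<in> hom X (R t) Q" "cp X p1 h = u'" "cp X p2 h = v'"
      using A.product_univ[OF prod, of u' "R t" v'] u' v' t a QP unfolding Q_def by (auto simp: hom_A)
    then show "\<exists>h. h \<in> hom X t Q \<and> cp X p1 h = u \<and> cp X p2 h = v"
      using X.assoc[OF rho_hom[OF t(1)] h(1) p(1)] X.assoc[OF rho_hom[OF t(1)] h(1) p(2)] u' v'
        X.comp_hom[OF rho_hom[OF t(1)] h(1)] by metis
  next
    fix t h1 h2 assume hh: "h1 \<in> hom X t Q" "h2 \<in> hom X t Q"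
      "cp X p1 h1 = cp X p1 h2" "cp X p2 h1 = cp X p2 h2"
    have t: "t \<in> ob X" "R t \<in> P" using X.hom_ob(1)[OF hh(1)] R_ob by auto
    note \<rho>t = rho_hom[OF t(1)]
    obtain h1' h2' where h': "h1' \<in> hom X (R t) Q" "cp X h1' (\<rho> t) = h1"
      "h2' \<in> hom X (R t) Q" "cp X h2' (\<rho> t) = h2"
      using reflection_ex1[OF t(1) QP hh(1)] reflection_ex1[OF t(1) QP hh(2)] by blast
    have "cp X p1 h1' = cp X p1 h2'" "cp X p2 h1' = cp X p2 h2'"
      using reflection_uniq[OF t(1) a(1) X.comp_hom[OF h'(1) p(1)] X.comp_hom[OF h'(3) p(1)]]
        reflection_uniq[OF t(1) a(2) X.comp_hom[OF h'(1) p(2)] X.comp_hom[OF h'(3) p(2)]]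
        X.assoc[OF \<rho>t h'(1) p(1)] X.assoc[OF \<rho>t h'(3) p(1)]
        X.assoc[OF \<rho>t h'(1) p(2)] X.assoc[OF \<rho>t h'(3) p(2)] h'(2,4) hh(3,4) by simp_all
    moreover have "h1' \<in> hom A (R t) (dm X p1)" "h2' \<in> hom A (R t) (dm X p1)"
      using h' t QP unfolding Q_def by (auto simp: hom_A)
    ultimately show "h1 = h2" using A.product_uniq[OF prod] h'(2,4) by metis
  qed
qed

lemma c_N:
  assumes "n \<in> N" "n \<in> hom X k a"
  shows "c a n \<in> N" "c a n \<in> hom X (dm X (c a n)) a"
  using A.closureD(1,2)[OF clos assms(1)] N_hom[OF assms(1)] assms(2) by (auto simp: hom_def)

lemma c_ext:
  assumes "n \<in> N" "n \<in> hom X k a"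
  shows "sub_le X n (c a n)"
  using A.closureD(3)[OF clos assms(1)] N_hom[OF assms(1)] assms(2) sub_le_A A.M_ar c_N[OF assms]
  by (auto simp: hom_def)

lemma c_mono:
  assumes "n \<in> N" "n \<in> hom X k a" "n' \<in> N" "n' \<in> hom X k' a" "sub_le X n n'"
  shows "sub_le X (c a n) (c a n')"
proof -
  have "n \<in> hom A k a" "cd X n' = a" "sub_le A n n'"
    using assms N_hom sub_le_A A.M_ar by (auto simp: hom_def)
  then show ?thesis
    using A.closureD(4)[OF clos assms(1)] assms(3) sub_le_A A.M_ar c_N assms by metis
qed

lemma c_comp_le:
  assumes n: "n \<in> N" "n \<in> hom X w a" and f: "f \<in> hom X a b" "b \<in> P"
    and n': "n' \<in> N" "n' \<in> hom X k b" "j \<in> hom X w k" "cp X f n = cp X n' j"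
  shows "sub_le X (cp X f (c a n)) (c b n')"
proof -
  have "n \<in> hom A w a" "f \<in> hom A a b" "n' \<in> hom A k b" "j \<in> hom A w k"
    using n f n' N_hom by (auto simp: hom_A hom_def)
  then have "sub_le A (cp X f (c a n)) (c b n')"
    using A.closure_comp_le[OF clos n(1)] n'(1,4) by blast
  then show ?thesis unfolding sub_le_def by auto
qed

lemma A_image_le:
  assumes "f \<in> F" "n' \<in> N" "f \<in> hom X a k" "n \<in> hom X k b" "n' \<in> hom X l b" "j \<in> hom X a l"
    "cp X n f = cp X n' j"
  shows "sub_le X n n'"
proof -
  have "f \<in> hom A a k" "n \<in> hom A k b" "n' \<in> hom A l b" "j \<in> hom A a l"
    using assms F_hom N_hom by (auto simp: hom_A hom_def)
  then have "sub_le A n n'" using A.image_le assms(1,2,7) by blast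
  then show ?thesis unfolding sub_le_def by auto
qed

section \<open>The initial lift \<open>c\<^sup>\<rho>\<close>\<close>

lemma crho_spec:
  assumes x: "x \<in> ob X" and m: "m \<in> hom X y x"
  obtains n f q where "n \<in> N" "f \<in> F" "f \<in> hom X (R y) (dm X n)" "n \<in> hom X (dm X n) (R x)"
    "Rm m = cp X n f" "is_pullback X (\<rho> x) (c (R x) n) (c\<rho> x m) q"
proof -
  have y: "y \<in> ob X" "dm X m = y" using X.hom_ob(1)[OF m] m by (auto simp: hom_def)
  define Q where "Q k \<longleftrightarrow> (\<exists>n. is_image A F N (Rm m) (idm X (R (dm X m))) n \<and>
      is_preimage X (\<rho> x) (c (R x) n) k)" for k
  have RmA: "Rm m \<in> hom A (R y) (R x)" using Rmor_spec(1)[OF m] R_ob x y by (auto simp: hom_A)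
  have "\<exists>k. Q k"
  proof -
    obtain k f n where fn: "f \<in> F" "n \<in> N" "f \<in> hom A (R y) k" "n \<in> hom A k (R x)" "Rm m = cp X n f"
      using A.factor[OF RmA] .
    then have "is_image A F N (Rm m) (idm X (R (dm X m))) n"
      using RmA y(2) A.is_imageI[OF fn(1-4)] by auto
    moreover obtain p q where "is_pullback X (\<rho> x) (c (R x) n) p q"
      using X.pullback_exists[OF fcX rho_hom[OF x] c_N(2)[OF fn(2)]] fn(4) by (auto simp: hom_A)
    ultimately show ?thesis unfolding Q_def is_preimage_def by blast
  qed
  then have "Q (c\<rho> x m)" unfolding crho_def Q_def[symmetric] by (rule someI_ex)
  then obtain n f q where nf: "n \<in> N" "f \<in> F" "cd X f = dm X n" "cp X (Rm m) (idm X (R y)) = cp X n f"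
      and pb: "is_pullback X (\<rho> x) (c (R x) n) (c\<rho> x m) q"
    unfolding Q_def is_image_def is_preimage_def y(2) by auto
  have Rm: "Rm m \<in> hom X (R y) (R x)" using Rmor_spec(1)[OF m] .
  then have "Rm m = cp X n f" using nf(4) by simp
  moreover have "f \<in> hom X (R y) (dm X n)" "n \<in> hom X (dm X n) (R x)"
    using X.comp_hom_split[of f n "R y" "R x"] F_hom[OF nf(2)] N_hom[OF nf(1)] nf(3) Rm calculation
    by (auto simp: hom_def)
  ultimately show ?thesis using that nf(1,2) pb by blast
qed

lemma crho_M:
  assumes x: "x \<in> ob X" and m: "m \<in> hom X y x"
  shows "c\<rho> x m \<in> M" "c\<rho> x m \<in> hom X (dm X (c\<rho> x m)) x"
proof -
  obtain n f q where n: "n \<in> N" "n \<in> hom X (dm X n) (R x)"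
    and pb: "is_pullback X (\<rho> x) (c (R x) n) (c\<rho> x m) q"
    using crho_spec[OF x m] by metis
  show "c\<rho> x m \<in> M" using X.pullback_M[OF pb] c_N[OF n] NM by blast
  show "c\<rho> x m \<in> hom X (dm X (c\<rho> x m)) x"
    using X.pullback_hom(3)[OF pb] rho_hom[OF x] by (simp add: hom_def)
qed

text \<open>The choice of an \<open>(F, N)\<close>-factorization of \<open>R m\<close> in the definition of \<open>c\<^sup>\<rho>\<close> is irrelevant.\<close>
lemma crho_le_iff:
  assumes x: "x \<in> ob X" and m: "m \<in> hom X y x"
    and nf: "n \<in> N" "f \<in> F" "f \<in> hom X (R y) k" "n \<in> hom X k (R x)" "Rm m = cp X n f"
    and u: "u \<in> hom X z x"
  shows "sub_le X u (c\<rho> x m) \<longleftrightarrow> (\<exists>v\<in>hom X z (dm X (c (R x) n)). cp X (\<rho> x) u = cp X (c (R x) n) v)"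
proof -
  obtain n0 f0 q where n0: "n0 \<in> N" "f0 \<in> F" "f0 \<in> hom X (R y) (dm X n0)" "n0 \<in> hom X (dm X n0) (R x)"
      "Rm m = cp X n0 f0" and pb: "is_pullback X (\<rho> x) (c (R x) n0) (c\<rho> x m) q"
    using crho_spec[OF x m] .
  note cn = c_N[OF nf(1,4)] and cn0 = c_N[OF n0(1,4)]
  have "sub_le X n n0" "sub_le X n0 n"
    using A_image_le[OF nf(2) n0(1) nf(3,4) n0(4,3)] A_image_le[OF n0(2) nf(1) n0(3,4) nf(4,3)] nf(5) n0(5)
    by simp_all
  then obtain w w' where w: "w \<in> hom X (dm X (c (R x) n)) (dm X (c (R x) n0))" "c (R x) n = cp X (c (R x) n0) w"
    and w': "w' \<in> hom X (dm X (c (R x) n0)) (dm X (c (R x) n))" "c (R x) n0 = cp X (c (R x) n) w'"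
    using c_mono[OF nf(1,4) n0(1,4)] c_mono[OF n0(1,4) nf(1,4)] X.sub_le_iff[OF cn(2) cn0(2)]
      X.sub_le_iff[OF cn0(2) cn(2)] by metis
  note D = X.pullback_hom[OF pb]
  have d: "c\<rho> x m \<in> hom X (dm X (c\<rho> x m)) x" using crho_M[OF x m] by blast
  have \<rho>x: "dm X (\<rho> x) = x" using rho_hom[OF x] by (simp add: hom_def)
  show ?thesis
  proof
    assume "sub_le X u (c\<rho> x m)"
    then obtain j where j: "j \<in> hom X z (dm X (c\<rho> x m))" "u = cp X (c\<rho> x m) j"
      using X.sub_le_iff[OF u d] by blast
    have "cp X (\<rho> x) u = cp X (c (R x) n) (cp X w' (cp X q j))"
      using j(2) X.assoc[OF j(1) d rho_hom[OF x]] D(5) X.assoc[OF j(1) D(4) cn0(2)] w'(2)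
        X.assoc[OF X.comp_hom[OF j(1) D(4)] w'(1) cn(2)] by simp
    then show "\<exists>v\<in>hom X z (dm X (c (R x) n)). cp X (\<rho> x) u = cp X (c (R x) n) v"
      using j(1) D(4) w'(1) by blast
  next
    assume "\<exists>v\<in>hom X z (dm X (c (R x) n)). cp X (\<rho> x) u = cp X (c (R x) n) v"
    then obtain v where v: "v \<in> hom X z (dm X (c (R x) n))" "cp X (\<rho> x) u = cp X (c (R x) n0) (cp X w v)"
      using X.assoc[OF _ w(1) cn0(2)] w(2) by metis
    obtain h where "h \<in> hom X z (dm X (c\<rho> x m))" "cp X (c\<rho> x m) h = u"
      using X.pullback_univ[OF pb _ X.comp_hom[OF v(1) w(1)] v(2)] u \<rho>x by metis
    then show "sub_le X u (c\<rho> x m)" using X.sub_le_iff[OF u d] by metis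
  qed
qed

lemma crho_through_c:
  assumes x: "x \<in> ob X" and m: "m \<in> hom X y x"
    and nf: "n \<in> N" "f \<in> F" "f \<in> hom X (R y) k" "n \<in> hom X k (R x)" "Rm m = cp X n f"
  obtains v where "v \<in> hom X (dm X (c\<rho> x m)) (dm X (c (R x) n))"
    "cp X (\<rho> x) (c\<rho> x m) = cp X (c (R x) n) v"
  using crho_le_iff[OF x m nf crho_M(2)[OF x m]] X.sub_le_refl crho_M(2)[OF x m] that
  by (auto simp: hom_def)

lemma le_crhoI:
  assumes x: "x \<in> ob X" and m: "m \<in> hom X y x"
    and nf: "n \<in> N" "f \<in> F" "f \<in> hom X (R y) k" "n \<in> hom X k (R x)" "Rm m = cp X n f"
    and u: "u \<in> hom X z x" "v \<in> hom X z (dm X (c (R x) n))" "cp X (\<rho> x) u = cp X (c (R x) n) v"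
  shows "sub_le X u (c\<rho> x m)"
  using crho_le_iff[OF x m nf u(1)] u(2,3) by blast

lemma crho_comp_le:
  assumes m: "m \<in> hom X w x" and f: "f \<in> hom X x y"
    and n': "n' \<in> hom X k y" "g \<in> hom X w k" "cp X f m = cp X n' g"
  shows "sub_le X (cp X f (c\<rho> x m)) (c\<rho> y n')"
proof -
  have ob: "x \<in> ob X" "y \<in> ob X" using X.hom_ob f by auto
  obtain n fn where nf: "n \<in> N" "fn \<in> F" "fn \<in> hom X (R w) (dm X n)" "n \<in> hom X (dm X n) (R x)"
      "Rm m = cp X n fn"
    using crho_spec[OF ob(1) m] by metis
  obtain n'' fn'' where nf'': "n'' \<in> N" "fn'' \<in> F" "fn'' \<in> hom X (R k) (dm X n'')"
      "n'' \<in> hom X (dm X n'') (R y)" "Rm n' = cp X n'' fn''"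
    using crho_spec[OF ob(2) n'(1)] by metis
  note Rf = Rmor_spec[OF f] and Rg = Rmor_spec(1)[OF n'(2)]
  have "cp X (cp X (Rm f) n) fn = cp X (Rm f) (Rm m)" using X.assoc[OF nf(3,4) Rf(1)] nf(5) by simp
  also have "\<dots> = cp X (Rm n') (Rm g)" using Rmor_comp[OF m f] Rmor_comp[OF n'(2,1)] n'(3) by simp
  also have "\<dots> = cp X n'' (cp X fn'' (Rm g))" using X.assoc[OF Rg nf''(3,4)] nf''(5) by simp
  finally have "sub_le X (cp X (Rm f) n) n''"
    using A_image_le[OF nf(2) nf''(1) nf(3) X.comp_hom[OF nf(4) Rf(1)] nf''(4)
        X.comp_hom[OF Rg nf''(3)]] by blast
  then obtain j where "j \<in> hom X (dm X n) (dm X n'')" "cp X (Rm f) n = cp X n'' j"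
    using X.sub_le_iff[OF X.comp_hom[OF nf(4) Rf(1)] nf''(4)] by blast
  then have "sub_le X (cp X (Rm f) (c (R x) n)) (c (R y) n'')"
    using c_comp_le[OF nf(1,4) Rf(1) R_ob(2)[OF ob(2)] nf''(1,4)] by blast
  then obtain t where t: "t \<in> hom X (dm X (c (R x) n)) (dm X (c (R y) n''))"
      "cp X (Rm f) (c (R x) n) = cp X (c (R y) n'') t"
    using X.sub_le_iff[OF X.comp_hom[OF c_N(2)[OF nf(1,4)] Rf(1)] c_N(2)[OF nf''(1,4)]] by blast
  obtain v where v: "v \<in> hom X (dm X (c\<rho> x m)) (dm X (c (R x) n))"
      "cp X (\<rho> x) (c\<rho> x m) = cp X (c (R x) n) v"
    using crho_through_c[OF ob(1) m nf(1-4) nf(5)] .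
  note d = crho_M(2)[OF ob(1) m]
  have "cp X (\<rho> y) (cp X f (c\<rho> x m)) = cp X (Rm f) (cp X (\<rho> x) (c\<rho> x m))"
    using X.assoc[OF d f rho_hom[OF ob(2)]] Rf(2) X.assoc[OF d rho_hom[OF ob(1)] Rf(1)] by simp
  also have "\<dots> = cp X (c (R y) n'') (cp X t v)"
    using v(2) X.assoc[OF v(1) c_N(2)[OF nf(1,4)] Rf(1)] t(2) X.assoc[OF v(1) t(1) c_N(2)[OF nf''(1,4)]]
    by simp
  finally show ?thesis
    using le_crhoI[OF ob(2) n'(1) nf''(1-4) nf''(5) X.comp_hom[OF d f] X.comp_hom[OF v(1) t(1)]] by blast
qed

lemma crho_ext:
  assumes m: "m \<in> hom X y x"
  shows "sub_le X m (c\<rho> x m)"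
proof -
  have ob: "x \<in> ob X" "y \<in> ob X" using X.hom_ob m by auto
  obtain n f where nf: "n \<in> N" "f \<in> F" "f \<in> hom X (R y) (dm X n)" "n \<in> hom X (dm X n) (R x)"
      "Rm m = cp X n f"
    using crho_spec[OF ob(1) m] by metis
  obtain j where j: "j \<in> hom X (dm X n) (dm X (c (R x) n))" "n = cp X (c (R x) n) j"
    using c_ext[OF nf(1,4)] X.sub_le_iff[OF nf(4) c_N(2)[OF nf(1,4)]] by blast
  note \<rho>y = rho_hom[OF ob(2)]
  have "cp X (\<rho> x) m = cp X (c (R x) n) (cp X j (cp X f (\<rho> y)))"
    using Rmor_spec(2)[OF m] nf(5) X.assoc[OF \<rho>y nf(3,4)] j(2)
      X.assoc[OF X.comp_hom[OF \<rho>y nf(3)] j(1) c_N(2)[OF nf(1,4)]] by simp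
  then show ?thesis
    using le_crhoI[OF ob(1) m nf(1-4) nf(5) m] j(1) nf(3) \<rho>y by blast
qed

lemma closure_operator_crho: "closure_operator X E M c\<rho>"
  unfolding closure_operator_def
proof (intro ballI conjI allI impI)
  fix x m assume x: "x \<in> ob X" and "m \<in> sub X M x"
  then have m: "m \<in> M" "m \<in> hom X (dm X m) x" using X.M_ar by (auto simp: sub_def hom_def)
  note d = crho_M[OF x m(2)]
  show "c\<rho> x m \<in> sub X M x" using d by (auto simp: sub_def hom_def)
  show "sub_le X m (c\<rho> x m)" using crho_ext[OF m(2)] .
  show "sub_le X (c\<rho> x m) (c\<rho> x n)" if nS: "n \<in> sub X M x" and mn: "sub_le X m n" for n
  proof -
    have n: "n \<in> hom X (dm X n) x" using nS X.M_ar by (auto simp: sub_def hom_def)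
    then obtain j where "j \<in> hom X (dm X m) (dm X n)" "cp X (idm X x) m = cp X n j"
      using X.sub_le_iff[OF m(2) n] mn m(2) by auto
    then show ?thesis using crho_comp_le[OF m(2) X.id_hom[OF x] n] d by simp
  qed
  show "sub_le X n1 (c\<rho> y n')"
    if f: "f \<in> hom X x y" and n1: "is_image X E M f (c\<rho> x m) n1" and n': "is_image X E M f m n'"
    for f y n1 n'
  proof -
    obtain e1 where e1: "e1 \<in> E" "e1 \<in> hom X (dm X (c\<rho> x m)) (dm X n1)" "n1 \<in> hom X (dm X n1) y"
        "cp X f (c\<rho> x m) = cp X n1 e1"
      using X.is_imageE[OF n1 X.comp_hom[OF d(2) f]] .
    obtain e' where e': "e' \<in> hom X (dm X m) (dm X n')" "n' \<in> hom X (dm X n') y" "cp X f m = cp X n' e'"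
      using X.is_imageE[OF n' X.comp_hom[OF m(2) f]] by metis
    obtain j where "j \<in> hom X (dm X (c\<rho> x m)) (dm X (c\<rho> y n'))" "cp X f (c\<rho> x m) = cp X (c\<rho> y n') j"
      using crho_comp_le[OF m(2) f e'(2,1,3)] X.sub_le_iff[OF X.comp_hom[OF d(2) f]]
        crho_M(2)[OF X.hom_ob(2)[OF f] e'(2)] by blast
    then show ?thesis
      using X.image_le[OF e1(1,3,2) crho_M[OF X.hom_ob(2)[OF f] e'(2)]] e1(4) by metis
  qed
qed

lemma crho_precomp_le:
  assumes m: "m \<in> hom X y x" and g: "g \<in> hom X z y" "Rm g \<in> F"
  shows "sub_le X (c\<rho> x m) (c\<rho> x (cp X m g))"
proof -
  have ob: "x \<in> ob X" "z \<in> ob X" using X.hom_ob m g by auto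
  obtain n f where nf: "n \<in> N" "f \<in> F" "f \<in> hom X (R y) (dm X n)" "n \<in> hom X (dm X n) (R x)"
      "Rm m = cp X n f"
    using crho_spec[OF ob(1) m] by metis
  note Rg = Rmor_spec(1)[OF g(1)]
  have "Rm g \<in> hom A (R z) (R y)" "f \<in> hom A (R y) (dm X n)"
    using Rg nf(3) R_ob N_hom[OF nf(1)] ob X.hom_ob(1)[OF m] by (auto simp: hom_A)
  then have "cp X f (Rm g) \<in> F" using A.E_comp[OF g(2) nf(2)] by blast
  moreover have "Rm (cp X m g) = cp X n (cp X f (Rm g))"
    using Rmor_comp[OF g(1) m] nf(5) X.assoc[OF Rg nf(3,4)] by simp
  moreover obtain v where "v \<in> hom X (dm X (c\<rho> x m)) (dm X (c (R x) n))"
      "cp X (\<rho> x) (c\<rho> x m) = cp X (c (R x) n) v"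
    using crho_through_c[OF ob(1) m nf] .
  ultimately show ?thesis
    using le_crhoI[OF ob(1) X.comp_hom[OF g(1) m] nf(1) _ X.comp_hom[OF Rg nf(3)] nf(4) _
        crho_M(2)[OF ob(1) m]] by blast
qed

lemma Rmor_N_factor:
  assumes \<delta>: "\<delta> \<in> N" "\<delta> \<in> hom X D Q"
  obtains \<tau> where "\<tau> \<in> F" "\<tau> \<in> hom X (R D) D" "cp X (\<rho> Q) \<delta> \<in> N"
    "Rm \<delta> = cp X (cp X (\<rho> Q) \<delta>) \<tau>"
proof -
  have P: "D \<in> P" "Q \<in> P" and ob: "D \<in> ob X" "Q \<in> ob X"
    using N_hom[OF \<delta>(1)] \<delta>(2) subA by (auto simp: hom_def)
  obtain \<tau> where \<tau>: "\<tau> \<in> hom X (R D) D" "cp X (\<rho> D) \<tau> = idm X (R D)" "\<tau> \<in> F"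
    using rho_inverse[OF P(1)] by metis
  have \<rho>Q: "\<rho> Q \<in> N" using rho_inverse[OF P(2)] by metis
  have "\<delta> \<in> hom A D Q" "\<rho> Q \<in> hom A Q (R Q)" using \<delta>(2) rho_hom P R_ob ob by (auto simp: hom_A)
  then have "cp X (\<rho> Q) \<delta> \<in> N" using A.M_comp[OF \<delta>(1) \<rho>Q] by blast
  moreover have "Rm \<delta> = cp X (cp X (\<rho> Q) \<delta>) \<tau>"
    using X.assoc[OF \<tau>(1) rho_hom[OF ob(1)] Rmor_spec(1)[OF \<delta>(2)]] \<tau>(2) Rmor_spec[OF \<delta>(2)] by simp
  ultimately show ?thesis using that \<tau> by blast
qed

lemma crho_eq_c:
  assumes \<delta>: "\<delta> \<in> N" "\<delta> \<in> hom X D Q"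
  shows "sub_eq X (c\<rho> Q \<delta>) (c Q \<delta>)"
proof -
  have P: "Q \<in> P" and ob: "D \<in> ob X" "Q \<in> ob X"
    using N_hom[OF \<delta>(1)] \<delta>(2) subA by (auto simp: hom_def)
  obtain \<sigma> where \<sigma>: "\<sigma> \<in> hom X (R Q) Q" "cp X \<sigma> (\<rho> Q) = idm X Q"
    using rho_inverse[OF P] by metis
  note \<rho>Q = rho_hom[OF ob(2)]
  define n where "n = cp X (\<rho> Q) \<delta>"
  obtain \<tau> where \<tau>: "\<tau> \<in> F" "\<tau> \<in> hom X (R D) D" "n \<in> N" and R\<delta>_factor: "Rm \<delta> = cp X n \<tau>"
    using Rmor_N_factor[OF \<delta>] unfolding n_def by metis
  have n: "n \<in> N" "n \<in> hom X D (R Q)" using \<tau>(3) X.comp_hom[OF \<delta>(2) \<rho>Q] unfolding n_def by auto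
  have id: "idm X D \<in> hom X D D" using X.id_hom[OF ob(1)] .
  note cn = c_N[OF n] and c\<delta> = c_N[OF \<delta>] and d = crho_M(2)[OF ob(2) \<delta>(2)]
  have "sub_le X (cp X \<sigma> (c (R Q) n)) (c Q \<delta>)"
    using c_comp_le[OF n \<sigma>(1) P \<delta> id] X.assoc[OF \<delta>(2) \<rho>Q \<sigma>(1)] \<sigma>(2) \<delta>(2)
    unfolding n_def by simp
  then obtain t where t: "t \<in> hom X (dm X (c (R Q) n)) (dm X (c Q \<delta>))"
      "cp X \<sigma> (c (R Q) n) = cp X (c Q \<delta>) t"
    using X.sub_le_iff[OF X.comp_hom[OF cn(2) \<sigma>(1)] c\<delta>(2)] by blast
  obtain v where v: "v \<in> hom X (dm X (c\<rho> Q \<delta>)) (dm X (c (R Q) n))"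
      "cp X (\<rho> Q) (c\<rho> Q \<delta>) = cp X (c (R Q) n) v"
    using crho_through_c[OF ob(2) \<delta>(2) n(1) \<tau>(1,2) n(2) R\<delta>_factor] .
  have "c\<rho> Q \<delta> = cp X (cp X \<sigma> (\<rho> Q)) (c\<rho> Q \<delta>)" using \<sigma>(2) d by simp
  also have "\<dots> = cp X (c Q \<delta>) (cp X t v)"
    using X.assoc[OF d \<rho>Q \<sigma>(1)] v(2) X.assoc[OF v(1) cn(2) \<sigma>(1)] t(2) X.assoc[OF v(1) t(1) c\<delta>(2)]
    by simp
  finally have "sub_le X (c\<rho> Q \<delta>) (c Q \<delta>)"
    using X.sub_le_iff[OF d c\<delta>(2)] X.comp_hom[OF v(1) t(1)] by blast
  moreover have "sub_le X (cp X (\<rho> Q) (c Q \<delta>)) (c (R Q) n)"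
    using c_comp_le[OF \<delta> \<rho>Q R_ob(2)[OF ob(2)] n id] X.comp_hom[OF \<delta>(2) \<rho>Q] unfolding n_def by simp
  then obtain w where "w \<in> hom X (dm X (c Q \<delta>)) (dm X (c (R Q) n))"
      "cp X (\<rho> Q) (c Q \<delta>) = cp X (c (R Q) n) w"
    using X.sub_le_iff[OF X.comp_hom[OF c\<delta>(2) \<rho>Q] cn(2)] by blast
  then have "sub_le X (c Q \<delta>) (c\<rho> Q \<delta>)"
    using le_crhoI[OF ob(2) \<delta>(2) n(1) \<tau>(1,2) n(2) R\<delta>_factor c\<delta>(2)] by blast
  ultimately show ?thesis unfolding sub_eq_def by blast
qed

lemma c_le_crho:
  assumes n: "n \<in> N" "n \<in> hom X k z" and f: "f \<in> F" "f \<in> hom X w k"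
    and m: "m \<in> hom X l z" "g \<in> hom X w l" "cp X n f = cp X m g"
  shows "sub_le X (c z n) (c\<rho> z m)"
proof -
  have z: "z \<in> ob X" using X.hom_ob(2)[OF n(2)] .
  have "Rm f \<in> F" using Rmor_F[OF f(1)] .
  then have le2: "sub_le X (c\<rho> z n) (c\<rho> z (cp X m g))"
    using crho_precomp_le[OF n(2) f(2)] m(3) by simp
  note mg = X.comp_hom[OF m(2,1)]
  have le3: "sub_le X (c\<rho> z (cp X m g)) (c\<rho> z m)"
    using crho_comp_le[OF mg X.id_hom[OF z] m(1,2)] mg crho_M(2)[OF z mg] by simp
  have le1: "sub_le X (c z n) (c\<rho> z n)" using crho_eq_c[OF n] unfolding sub_eq_def by blast
  show ?thesis
    using X.sub_le_trans[OF X.sub_le_trans[OF le1 le2] le3] X.hom_ar crho_M(2)[OF z m(1)] crho_M(2)[OF z mg]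
    by blast
qed

lemma crho_top:
  assumes m: "m \<in> hom X y x" and s: "s \<in> hom X (R x) (R y)" "cp X (Rm m) s = idm X (R x)"
  shows "sub_le X (idm X x) (c\<rho> x m)"
proof -
  have ob: "x \<in> ob X" using X.hom_ob(2)[OF m] .
  obtain n f where nf: "n \<in> N" "f \<in> F" "f \<in> hom X (R y) (dm X n)" "n \<in> hom X (dm X n) (R x)"
      "Rm m = cp X n f"
    using crho_spec[OF ob m] by metis
  obtain j where j: "j \<in> hom X (dm X n) (dm X (c (R x) n))" "n = cp X (c (R x) n) j"
    using c_ext[OF nf(1,4)] X.sub_le_iff[OF nf(4) c_N(2)[OF nf(1,4)]] by blast
  note \<rho>x = rho_hom[OF ob]
  have "cp X (\<rho> x) (idm X x) = cp X (cp X (Rm m) s) (\<rho> x)" using s(2) \<rho>x by simp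
  also have "\<dots> = cp X (c (R x) n) (cp X j (cp X f (cp X s (\<rho> x))))"
    using nf(5) j(2) X.assoc[OF \<rho>x s(1) X.comp_hom[OF nf(3,4)]] X.assoc[OF X.comp_hom[OF \<rho>x s(1)] nf(3,4)]
      X.assoc[OF X.comp_hom[OF X.comp_hom[OF \<rho>x s(1)] nf(3)] j(1) c_N(2)[OF nf(1,4)]] by simp
  finally show ?thesis
    using le_crhoI[OF ob m nf(1-4) nf(5) X.id_hom[OF ob]] j(1) nf(3) s(1) \<rho>x by blast
qed

lemma diagonal_crho_closed:
  assumes sep: "separated A c a" and pa: "is_product A a a \<pi>1 \<pi>2"
    and \<delta>: "\<delta> \<in> hom A a (dm X \<pi>1)" "cp X \<pi>1 \<delta> = idm X a" "cp X \<pi>2 \<delta> = idm X a"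
  shows "\<delta> \<in> N" "sub_le X (c\<rho> (dm X \<pi>1) \<delta>) \<delta>"
proof -
  define Q where "Q = dm X \<pi>1"
  show \<delta>N: "\<delta> \<in> N" using A.left_inverse_M[OF \<delta>(1) A.product_hom(1)[OF pa] \<delta>(2)] .
  have \<delta>X: "\<delta> \<in> hom X a Q" using \<delta>(1) unfolding Q_def by (simp add: hom_A)
  have "is_closed A c \<delta>"
    by (rule sep[unfolded separated_def, rule_format, OF pa]) (use \<delta> in \<open>auto simp: hom_def\<close>)
  then have "sub_le A (c Q \<delta>) \<delta>" using \<delta>X unfolding is_closed_def sub_eq_def by (simp add: hom_def)
  then have "sub_le X (c Q \<delta>) \<delta>" using sub_le_A A.M_ar c_N(1)[OF \<delta>N \<delta>X] \<delta>N by blast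
  then show "sub_le X (c\<rho> (dm X \<pi>1) \<delta>) \<delta>"
    using crho_eq_c[OF \<delta>N \<delta>X] X.sub_le_trans X.hom_ar[OF \<delta>X] unfolding sub_eq_def Q_def by blast
qed

text \<open>The graph of \<open>f\<close> is the preimage of the diagonal of \<open>a\<close>.\<close>
lemma graph_crho_closed:
  assumes fcA: "finitely_complete A" and a: "a \<in> P" "separated A c a" and f: "f \<in> hom X x a"
    and px: "is_product X x a p1 p2"
    and \<gamma>: "\<gamma> \<in> hom X x (dm X p1)" "cp X p1 \<gamma> = idm X x" "cp X p2 \<gamma> = f"
  shows "sub_le X (c\<rho> (dm X p1) \<gamma>) \<gamma>"
proof -
  have "a \<in> ob A" using a subA by auto
  then obtain \<pi>1 \<pi>2 where pa: "is_product A a a \<pi>1 \<pi>2" using A.product_exists[OF fcA] by metis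
  define Q where "Q = dm X \<pi>1"
  obtain \<delta> where \<delta>A: "\<delta> \<in> hom A a Q" "cp X \<pi>1 \<delta> = idm X a" "cp X \<pi>2 \<delta> = idm X a"
    using A.product_univ[OF pa, of "idm X a" a "idm X a"] A.id_hom \<open>a \<in> ob A\<close> unfolding Q_def by auto
  have \<delta>: "\<delta> \<in> hom X a Q" "\<delta> \<in> N" "sub_le X (c\<rho> Q \<delta>) \<delta>"
    using \<delta>A diagonal_crho_closed[OF a(2) pa \<delta>A[unfolded Q_def]] unfolding Q_def by (auto simp: hom_A)
  define V where "V = dm X p1"
  have p: "p1 \<in> hom X V x" "p2 \<in> hom X V a" using X.product_hom[OF px] unfolding V_def by auto
  obtain G where G: "G \<in> hom X V Q" "cp X \<pi>1 G = cp X f p1" "cp X \<pi>2 G = p2"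
    using X.product_univ[OF product_A_X[OF a(1) a(1) pa] X.comp_hom[OF p(1) f] p(2)]
    unfolding V_def Q_def by blast
  have pb: "is_pullback X G \<delta> \<gamma> f"
    using X.graph_pullback[OF px product_A_X[OF a(1) a(1) pa] f \<gamma>] \<delta>A G unfolding V_def Q_def
    by (auto simp: hom_A)
  note d = crho_M(2)[OF X.hom_ob(1)[OF p(1)] \<gamma>(1)[folded V_def]]
  have "sub_le X (cp X G (c\<rho> V \<gamma>)) (c\<rho> Q \<delta>)"
    using crho_comp_le[OF \<gamma>(1)[folded V_def] G(1) \<delta>(1) f] X.pullback_hom(5)[OF pb] by blast
  then have "sub_le X (cp X G (c\<rho> V \<gamma>)) \<delta>"
    using \<delta>(3) X.sub_le_trans X.hom_ar[OF \<delta>(1)] by blast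
  then obtain w where w: "w \<in> hom X (dm X (c\<rho> V \<gamma>)) a" "cp X G (c\<rho> V \<gamma>) = cp X \<delta> w"
    using X.sub_le_iff[OF X.comp_hom[OF d G(1)] \<delta>(1)] by blast
  have "c\<rho> V \<gamma> \<in> hom X (dm X (c\<rho> V \<gamma>)) (dm X G)" "w \<in> hom X (dm X (c\<rho> V \<gamma>)) (dm X \<delta>)"
    using d w(1) G(1) \<delta>(1) by (auto simp: hom_def)
  then obtain h where "h \<in> hom X (dm X (c\<rho> V \<gamma>)) (dm X \<gamma>)" "cp X \<gamma> h = c\<rho> V \<gamma>"
    using X.pullback_univ[OF pb _ _ w(2)] by metis
  then have "h \<in> hom X (dm X (c\<rho> V \<gamma>)) x" "cp X \<gamma> h = c\<rho> V \<gamma>" using \<gamma>(1) by (auto simp: hom_def)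
  then show ?thesis using X.sub_le_iff[OF d \<gamma>(1)[folded V_def]] unfolding V_def by metis
qed

lemma rho_in_E:
  assumes fcA: "finitely_complete A" and cpt: "compact X E M c\<rho> x"
    and em: "e \<in> E" "m \<in> M" "e \<in> hom X x y" "m \<in> hom X y (R x)" "\<rho> x = cp X m e"
    and sep: "separated A c (R x)"
  shows "\<rho> x \<in> E"
proof -
  have x: "x \<in> ob X" "R x \<in> ob X" "R x \<in> P" using cpt R_ob unfolding compact_def by auto
  note \<rho>x = rho_hom[OF x(1)]
  obtain p1 p2 where px: "is_product X x (R x) p1 p2" using X.product_exists[OF fcX x(1,2)] .
  define V where "V = dm X p1"
  have p2: "p2 \<in> hom X V (R x)" using X.product_hom[OF px] unfolding V_def by auto
  obtain \<gamma> where \<gamma>: "\<gamma> \<in> hom X x V" "cp X p1 \<gamma> = idm X x" "cp X p2 \<gamma> = \<rho> x"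
    using X.product_univ[OF px X.id_hom[OF x(1)] \<rho>x] unfolding V_def by metis
  have \<gamma>M: "\<gamma> \<in> M" using X.left_inverse_M[OF \<gamma>(1) _ \<gamma>(2)] X.product_hom[OF px] unfolding V_def by blast
  obtain h where h: "h \<in> hom X (dm X (c\<rho> V \<gamma>)) x" "c\<rho> V \<gamma> = cp X \<gamma> h"
    using graph_crho_closed[OF fcA x(3) sep \<rho>x px \<gamma>[unfolded V_def]]
      X.sub_le_iff[OF crho_M(2)[OF X.hom_ob(2)[OF \<gamma>(1)] \<gamma>(1)] \<gamma>(1)] unfolding V_def by blast
  have "cp X p2 (c\<rho> V \<gamma>) = cp X m (cp X e h)"
    using h(2) X.assoc[OF h(1) \<gamma>(1) p2] \<gamma>(3) em(5) X.assoc[OF h(1) em(3,4)] by simp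
  moreover have "preserving X E M c\<rho> p2" using cpt x(2) px unfolding compact_def by blast
  moreover have "is_image X E M p2 \<gamma> m" using X.is_imageI[OF em(1,2,3,4)] \<gamma>(3) em(5) by simp
  ultimately have closed: "sub_le X (c\<rho> (R x) m) m"
    using X.preserving_le[OF closure_operator_crho _ p2 \<gamma>M \<gamma>(1) _ em(2,4) X.comp_hom[OF h(1) em(3)]]
    by blast
  obtain \<sigma> where \<sigma>: "\<sigma> \<in> hom X (R (R x)) (R x)" "cp X (\<rho> (R x)) \<sigma> = idm X (R (R x))"
    using rho_inverse[OF x(3)] by metis
  have "cp X (Rm m) (cp X (Rm e) \<sigma>) = idm X (R (R x))"
    using X.assoc[OF \<sigma>(1) Rmor_spec(1)[OF em(3)] Rmor_spec(1)[OF em(4)]] Rmor_comp[OF em(3,4)] em(5)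
      Rmor_rho[OF x(1)] \<sigma>(2) by simp
  then have "sub_le X (idm X (R x)) (c\<rho> (R x) m)"
    using crho_top[OF em(4) X.comp_hom[OF \<sigma>(1) Rmor_spec(1)[OF em(3)]]] by blast
  then obtain t where "t \<in> hom X (R x) y" "idm X (R x) = cp X m t"
    using X.sub_le_trans[OF _ closed] X.sub_le_iff[OF X.id_hom[OF x(2)] em(4)] X.M_ar[OF em(2)] by blast
  then have "m \<in> E" using X.iso_E X.mono_right_inverse_iso[OF X.M_mono[OF em(2)] em(4)] by metis
  then show ?thesis using X.E_comp[OF em(1) _ em(3,4)] em(5) by simp
qed

lemma preserving_in_A:
  assumes p: "p \<in> hom A w z" and pres: "preserving X E M c\<rho> p"
  shows "preserving A F N c p"
proof (rule A.preservingI[OF clos p])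
  have pX: "p \<in> hom X w z" "w \<in> P" "z \<in> P" using p by (auto simp: hom_A)
  fix n n1 n2 assume n: "n \<in> N" "n \<in> hom A (dm X n) w"
    and n1: "is_image A F N p (c w n) n1" and n2: "is_image A F N p n n2"
  have nX: "n \<in> hom X (dm X n) w" using n(2) by (simp add: hom_A)
  note cn = c_N[OF n(1) nX]
  have "c w n \<in> hom A (dm X (c w n)) w" using cn N_hom[OF cn(1)] pX by (auto simp: hom_A)
  then obtain f1 where f1: "f1 \<in> hom A (dm X (c w n)) (dm X n1)" "n1 \<in> hom A (dm X n1) z"
      "cp X p (c w n) = cp X n1 f1"
    using A.is_imageE[OF n1 A.comp_hom[OF _ p]] by metis
  obtain f2 where f2: "f2 \<in> F" "f2 \<in> hom A (dm X n) (dm X n2)" "n2 \<in> hom A (dm X n2) z"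
      "cp X p n = cp X n2 f2"
    using A.is_imageE[OF n2 A.comp_hom[OF n(2) p]] .
  have N12: "n1 \<in> N" "n2 \<in> N" using n1 n2 unfolding is_image_def by blast+
  obtain k e2 m2 where em2: "e2 \<in> E" "m2 \<in> M" "e2 \<in> hom X (dm X n) k" "m2 \<in> hom X k z"
      "cp X p n = cp X m2 e2"
    using X.factor[OF X.comp_hom[OF nX pX(1)]] .
  have "sub_le X (c z n2) (c\<rho> z m2)"
    using c_le_crho[OF N12(2) _ f2(1) _ em2(4,3)] f2 em2(5) by (auto simp: hom_A)
  moreover obtain j where j: "j \<in> hom X (dm X (c\<rho> w n)) (dm X (c w n))" "c\<rho> w n = cp X (c w n) j"
    using crho_eq_c[OF n(1) nX] X.sub_le_iff[OF crho_M(2)[OF _ nX] cn(2)] subA pX(2)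
    unfolding sub_eq_def by blast
  have "sub_le X (c\<rho> z m2) n1"
  proof (rule X.preserving_le[OF closure_operator_crho pres pX(1) _ nX])
    show "n \<in> M" using n(1) NM by blast
    show "is_image X E M p n m2" using X.is_imageI[OF em2(1-5)] .
    show "n1 \<in> M" "n1 \<in> hom X (dm X n1) z" using N12(1) NM f1(2) by (auto simp: hom_A)
    show "cp X f1 j \<in> hom X (dm X (c\<rho> w n)) (dm X n1)" using j(1) f1(1) by (auto simp: hom_A)
    show "cp X p (c\<rho> w n) = cp X n1 (cp X f1 j)"
      using j(2) X.assoc[OF j(1) cn(2) pX(1)] f1(3) X.assoc[OF j(1)] f1(1,2) by (auto simp: hom_A)
  qed
  ultimately have "sub_le X (c z n2) n1" using X.sub_le_trans X.hom_ar f1(2) by (auto simp: hom_A)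
  moreover have "c z n2 \<in> N" using c_N(1)[OF N12(2)] f2(3) by (auto simp: hom_A)
  ultimately show "sub_le A (c z n2) n1" using sub_le_A A.M_ar N12(1) by blast
qed

lemma compact_in_A:
  assumes a: "a \<in> P" and cpt: "compact X E M c\<rho> a"
  shows "compact A F N c a"
  unfolding compact_def
proof (intro conjI ballI allI impI)
  show "a \<in> ob A" using a subA by auto
  fix z p1 p2 assume z: "z \<in> ob A" and prod: "is_product A a z p1 p2"
  have "preserving X E M c\<rho> p2"
    using cpt z product_A_X[OF a _ prod] subA unfolding compact_def by auto
  then show "preserving A F N c p2" using preserving_in_A A.product_hom(2)[OF prod] by blast
qed

end

theorem proposition2p6:
  fixes X :: "('o, 'm) cat" and P :: "'o set"
    and E M F N :: "'m set"
    and R :: "'o \<Rightarrow> 'o" and \<rho> :: "'o \<Rightarrow> 'm"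
    and c :: "'o \<Rightarrow> 'm \<Rightarrow> 'm"
    and x :: 'o and e m :: 'm
  assumes catX: "is_cat X"
    and fcX: "finitely_complete X"
    and fcA: "finitely_complete (fullsub X P)"
    and fsX: "proper_fs X E M"
    and fsA: "proper_fs (fullsub X P) F N"
    and subA: "P \<subseteq> ob X"
    and refl: "is_reflection X P R \<rho>"
    and NM: "N \<subseteq> M"
    and RE: "\<forall>f\<in>E. Rmor X R \<rho> f \<in> F"
    and Estable: "stable_under_pullback X E"
    and clos: "closure_operator (fullsub X P) F N c"
    and cpt: "compact X E M (crho X P F N R \<rho> c) x"
    and fact: "e \<in> E" "m \<in> M" "cd X e = dm X m" "\<rho> x = cp X m e"
  shows "compact X E M (crho X P F N R \<rho> c) (cd X e) \<and>
         (separated (fullsub X P) c (R x) \<longrightarrow>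
            \<rho> x \<in> E \<and> compact (fullsub X P) F N c (R x))"
proof -
  interpret reflective_setting X P E M F N R \<rho> c
    using catX fcX fsX fsA subA refl NM RE clos by unfold_locales
  have x: "x \<in> ob X" using cpt unfolding compact_def by blast
  have e: "e \<in> hom X x (cd X e)" and m: "m \<in> hom X (cd X e) (R x)"
    using X.comp_hom_split[OF X.E_ar X.M_ar] fact rho_hom[OF x] by metis+
  have "compact X E M c\<rho> (cd X e)"
    using X.compact_image_E[OF fcX Estable closure_operator_crho cpt fact(1) e] .
  moreover have "\<rho> x \<in> E \<and> compact A F N c (R x)" if sep: "separated A c (R x)"
  proof
    show \<rho>E: "\<rho> x \<in> E" using rho_in_E[OF fcA cpt fact(1,2) e m fact(4) sep] .
    have "compact X E M c\<rho> (R x)"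
      using X.compact_image_E[OF fcX Estable closure_operator_crho cpt \<rho>E rho_hom[OF x]] .
    then show "compact A F N c (R x)" using compact_in_A R_ob(2)[OF x] by blast
  qed
  ultimately show ?thesis by blast
qed

end
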